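(* There are at least $37$ pairwise inequivalent extremal Type~II $\mathbb{Z}_4$-codes of length $40$.
   Context: A $\mathbb{Z}_4$-code of length $n$ is a $\mathbb{Z}_4$-submodule of $\mathbb{Z}_4^n$; it is self-dual if it equals its dual with respect to $x\cdot y=\sum x_iy_i \pmod 4$. The Euclidean weight of $x$ is $n_1(x)+4n_2(x)+n_3(x)$, $n_\alpha(x)$ being the number of coordinates equal to $\alpha$. A Type~II $\mathbb{Z}_4$-code is a self-dual code all of whose codewords have Euclidean weight divisible by $8$; it is extremal if its minimum Euclidean weight equals $8\lfloor n/24\rfloor+8$. Two $\mathbb{Z}_4$-codes are equivalent if one can be obtained from the other by permuting coordinates and changing the signs of some coordinates. *)

theory Defs
  imports Main "HOL-Library.Numeral_Type"
begin

text \<open>Z4 is the numeral type 4 (integers mod 4); a vector of length n is a function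
  from a finite index type of cardinality n into Z4.\<close>

definition z4_code :: "('n::finite \<Rightarrow> 4) set \<Rightarrow> bool" where
  "z4_code C \<longleftrightarrow> (\<lambda>i. 0) \<in> C \<and>
     (\<forall>x\<in>C. \<forall>y\<in>C. (\<lambda>i. x i + y i) \<in> C) \<and>
     (\<forall>a::4. \<forall>x\<in>C. (\<lambda>i. a * x i) \<in> C)"

definition z4_inner :: "('n::finite \<Rightarrow> 4) \<Rightarrow> ('n \<Rightarrow> 4) \<Rightarrow> 4" where
  "z4_inner x y = (\<Sum>i\<in>UNIV. x i * y i)"

definition z4_dual :: "('n::finite \<Rightarrow> 4) set \<Rightarrow> ('n \<Rightarrow> 4) set" where
  "z4_dual C = {y. \<forall>x\<in>C. z4_inner x y = 0}"

definition z4_self_dual :: "('n::finite \<Rightarrow> 4) set \<Rightarrow> bool" where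
  "z4_self_dual C \<longleftrightarrow> z4_code C \<and> C = z4_dual C"

definition n_count :: "4 \<Rightarrow> ('n::finite \<Rightarrow> 4) \<Rightarrow> nat" where
  "n_count a x = card {i. x i = a}"

definition euclid_wt :: "('n::finite \<Rightarrow> 4) \<Rightarrow> nat" where
  "euclid_wt x = n_count 1 x + 4 * n_count 2 x + n_count 3 x"

definition type_II :: "('n::finite \<Rightarrow> 4) set \<Rightarrow> bool" where
  "type_II C \<longleftrightarrow> z4_self_dual C \<and> (\<forall>x\<in>C. 8 dvd euclid_wt x)"

definition min_euclid_wt :: "('n::finite \<Rightarrow> 4) set \<Rightarrow> nat" where
  "min_euclid_wt C = Min {euclid_wt x | x. x \<in> C \<and> x \<noteq> (\<lambda>i. 0)}"

definition extremal_type_II :: "('n::finite \<Rightarrow> 4) set \<Rightarrow> bool" where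
  "extremal_type_II C \<longleftrightarrow> type_II C \<and>
     min_euclid_wt C = 8 * (CARD('n) div 24) + 8"

definition z4_equiv :: "('n::finite \<Rightarrow> 4) set \<Rightarrow> ('n \<Rightarrow> 4) set \<Rightarrow> bool" where
  "z4_equiv C D \<longleftrightarrow> (\<exists>\<sigma> \<epsilon>. bij \<sigma> \<and> (\<forall>i. \<epsilon> i = (1::4) \<or> \<epsilon> i = -1) \<and>
     D = (\<lambda>x. \<lambda>i. \<epsilon> i * x (\<sigma> i)) ` C)"

end

theory Submission
  imports Defs
begin

(*
  Proof idea.  We exhibit 37 explicit Z4-codes of length 40 and prove that they are
  extremal Type II and pairwise inequivalent.

  (1) Generators in standard form.  Let g_0, ..., g_(k-1) be pairwise orthogonal vectors
      with g_i(p_j) = delta_ij for pivot coordinates p_j.  The set C of vectors x that are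
      orthogonal to every g_i and congruent mod 2 to sum_i x(p_i) g_i is always a
      self-dual Z4-code (it is spanned by the g_i and twice the binary dual of the
      residue code).
  (2) If moreover every g_i has Euclidean weight divisible by 8, the residue code contains
      the all-ones word, has minimum Hamming weight at least 16 and has pairwise distinct
      columns, and C contains a vector of Euclidean weight 16, then C is Type II of
      minimum Euclidean weight 16, hence extremal at length 40.
  (3) The number of weight-16 residue words that have exactly 14 weight-16 residue words
      at Hamming distance 16 is invariant under monomial equivalence.
  (4) For 37 explicit generator matrices the hypotheses of (2) and the value of the
      invariant (3) are established by evaluating executable list functions, which are
      proved to compute the abstract notions; the 37 values of the invariant are distinct.
*)

section \<open>Arithmetic in Z4\<close>

lemma z4_cases: "(a::4) = 0 \<or> a = 1 \<or> a = 2 \<or> a = 3"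
proof (cases a rule: bit0_cases)
  case (of_int z)
  then have "z = 0 \<or> z = 1 \<or> z = 2 \<or> z = 3" by auto
  then show ?thesis using of_int by auto
qed

lemma four_times_z4 [simp]: "4 * (a::4) = 0"
proof -
  have "(4::4) = 0" by simp
  then show ?thesis by (metis mult_zero_left)
qed

lemma of_nat_z4_eq_0: "(of_nat n :: 4) = 0 \<longleftrightarrow> 4 dvd n"
  by (simp add: of_nat_eq_0_iff_char_dvd)

lemma of_nat_z4_mod: "(of_nat n :: 4) = of_nat (n mod 4)"
proof -
  have "(of_nat n :: 4) = of_nat (4 * (n div 4)) + of_nat (n mod 4)"
    by (metis of_nat_add div_mult_mod_eq mult.commute)
  moreover have "(of_nat (4 * (n div 4)) :: 4) = 0" by (simp only: of_nat_z4_eq_0) simp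
  ultimately show ?thesis by simp
qed

definition z4_odd :: "4 \<Rightarrow> bool" where
  "z4_odd a \<longleftrightarrow> a = 1 \<or> a = 3"

definition sym_wt :: "4 \<Rightarrow> nat" where
  "sym_wt a = (if a = 1 \<or> a = 3 then 1 else if a = 2 then 4 else 0)"

definition z4_rep :: "4 \<Rightarrow> nat" where
  "z4_rep a = (if a = 1 then 1 else if a = 2 then 2 else if a = 3 then 3 else 0)"

lemma of_nat_z4_rep: "of_nat (z4_rep a) = a"
  using z4_cases[of a] by (auto simp: z4_rep_def)

text \<open>The basic identity behind Type II codes: wt(a+b) = wt(a) + wt(b) + 2ab (mod 8).\<close>
lemma sym_wt_add: "sym_wt (a + b) mod 8 = (sym_wt a + sym_wt b + 2 * (z4_rep a * z4_rep b)) mod 8"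
  using z4_cases[of a] z4_cases[of b] by (auto simp: sym_wt_def z4_rep_def)

lemma z4_odd_0 [simp]: "\<not> z4_odd 0"
  by (simp add: z4_odd_def)

lemma z4_odd_neg: "z4_odd (- a) \<longleftrightarrow> z4_odd a"
  using z4_cases[of a] by (auto simp: z4_odd_def)

lemma z4_odd_add: "z4_odd (a + b) \<longleftrightarrow> z4_odd a \<noteq> z4_odd b"
  using z4_cases[of a] z4_cases[of b] by (auto simp: z4_odd_def)

lemma z4_odd_mult: "z4_odd (a * b) \<longleftrightarrow> z4_odd a \<and> z4_odd b"
  using z4_cases[of a] z4_cases[of b] by (auto simp: z4_odd_def)

lemma z4_odd_of_nat: "z4_odd (of_nat n) \<longleftrightarrow> odd n"
proof -
  have "n mod 4 = 0 \<or> n mod 4 = 1 \<or> n mod 4 = 2 \<or> n mod 4 = 3" by auto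
  moreover have "odd n \<longleftrightarrow> odd (n mod 4)"
    by (simp add: even_iff_mod_2_eq_zero mod_mod_cancel)
  ultimately show ?thesis by (subst of_nat_z4_mod) (auto simp: z4_odd_def)
qed

lemma two_times_z4: "2 * (a::4) = (if z4_odd a then 2 else 0)"
  using z4_cases[of a] by (auto simp: z4_odd_def)

lemma two_times_z4_eq_0: "2 * (a::4) = 0 \<longleftrightarrow> a = 0 \<or> a = 2"
  using z4_cases[of a] by auto

lemma z4_even_iff: "\<not> z4_odd a \<longleftrightarrow> a = 0 \<or> a = 2"
  using z4_cases[of a] by (auto simp: z4_odd_def)

lemma z4_odd_add_even: "d = 0 \<or> d = 2 \<Longrightarrow> z4_odd (a + d) = z4_odd a"
  using z4_cases[of a] by (auto simp: z4_odd_def)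

lemma z4_odd_sum_cong:
  fixes f f' :: "nat \<Rightarrow> 4"
  shows "(\<And>i. i < m \<Longrightarrow> z4_odd (f i) = z4_odd (f' i)) \<Longrightarrow>
         z4_odd (\<Sum>i<m. f i) = z4_odd (\<Sum>i<m. f' i)"
  by (induction m) (simp_all add: z4_odd_add)

section \<open>Euclidean weight and inner product\<close>

lemma card_eq_sum_indicator: "card {l::'n::finite. P l} = (\<Sum>l\<in>UNIV. if P l then 1 else 0)"
  by (simp add: sum.If_cases)

lemma euclid_wt_sum: "euclid_wt (x :: 'n::finite \<Rightarrow> 4) = (\<Sum>l\<in>UNIV. sym_wt (x l))"
proof -
  have "euclid_wt x = (\<Sum>l\<in>UNIV. (if x l = 1 then 1 else 0) + 4 * (if x l = 2 then 1 else 0)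
                                   + (if x l = 3 then 1 else 0))"
    by (simp add: euclid_wt_def n_count_def card_eq_sum_indicator sum.distrib sum_distrib_left)
  also have "\<dots> = (\<Sum>l\<in>UNIV. sym_wt (x l))"
    by (rule sum.cong) (auto simp: sym_wt_def)
  finally show ?thesis .
qed

lemma euclid_wt_zero: "euclid_wt (\<lambda>l::'n::finite. (0::4)) = 0"
  by (simp add: euclid_wt_sum sym_wt_def)

lemma euclid_wt_neg: "euclid_wt (\<lambda>l. - x l) = euclid_wt (x :: 'n::finite \<Rightarrow> 4)"
proof -
  have "sym_wt (- a) = sym_wt a" for a using z4_cases[of a] by (auto simp: sym_wt_def)
  then show ?thesis by (simp add: euclid_wt_sum)
qed

lemma euclid_wt_even_vec:
  assumes "\<And>l. x l = 0 \<or> x l = 2"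
  shows "euclid_wt (x :: 'n::finite \<Rightarrow> 4) = 4 * card {l. x l = 2}"
proof -
  have "sym_wt (x l) = 4 * (if x l = 2 then 1 else 0)" for l
    using assms[of l] by (auto simp: sym_wt_def)
  then show ?thesis by (simp add: euclid_wt_sum card_eq_sum_indicator sum_distrib_left)
qed

lemma card_odd_le_euclid_wt: "card {l. z4_odd (x l)} \<le> euclid_wt (x :: 'n::finite \<Rightarrow> 4)"
proof -
  have "card {l. z4_odd (x l)} = (\<Sum>l\<in>UNIV. if z4_odd (x l) then 1 else 0)"
    by (rule card_eq_sum_indicator)
  also have "\<dots> \<le> (\<Sum>l\<in>UNIV. sym_wt (x l))"
    by (rule sum_mono) (auto simp: sym_wt_def z4_odd_def)
  finally show ?thesis by (simp add: euclid_wt_sum)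
qed

lemma inner_comm: "z4_inner x y = z4_inner y x"
  by (simp add: z4_inner_def mult.commute)

lemma inner_add_left: "z4_inner (\<lambda>i. x i + y i) a = z4_inner x a + z4_inner y a"
  by (simp add: z4_inner_def distrib_right sum.distrib)

lemma inner_add_right: "z4_inner a (\<lambda>i. x i + y i) = z4_inner a x + z4_inner a y"
  by (simp add: z4_inner_def distrib_left sum.distrib)

lemma inner_smult_right: "z4_inner a (\<lambda>i. c * x i) = c * z4_inner a x"
  by (simp add: z4_inner_def sum_distrib_left mult.left_commute)

lemma inner_sum_left:
  "z4_inner (\<lambda>l. \<Sum>i<k. c i * g i l) y = (\<Sum>i<k. c i * z4_inner (g i) y)"
  by (simp add: z4_inner_def sum_distrib_right sum_distrib_left mult.assoc sum.swap[of _ _ UNIV])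

text \<open>Euclidean weights of orthogonal vectors add modulo 8; this is why a self-orthogonal code
  spanned by vectors of weight divisible by 8 is Type II.\<close>
lemma euclid_wt_add_orth:
  assumes "z4_inner x y = 0"
  shows "euclid_wt (\<lambda>i. x i + y i) mod 8 = (euclid_wt x + euclid_wt y) mod 8"
proof -
  let ?P = "\<Sum>l\<in>UNIV. z4_rep (x l) * z4_rep (y l)"
  have "(of_nat ?P :: 4) = z4_inner x y"
    by (simp add: z4_inner_def of_nat_z4_rep)
  then obtain q where q: "?P = 4 * q" using assms of_nat_z4_eq_0 by (metis dvdE)
  have "euclid_wt (\<lambda>i. x i + y i) mod 8 = (\<Sum>l\<in>UNIV. sym_wt (x l + y l) mod 8) mod 8"
    by (simp add: euclid_wt_sum mod_sum_eq)
  also have "\<dots> = (\<Sum>l\<in>UNIV. (sym_wt (x l) + sym_wt (y l) + 2 * (z4_rep (x l) * z4_rep (y l))) mod 8) mod 8"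
    by (simp add: sym_wt_add)
  also have "\<dots> = (euclid_wt x + euclid_wt y + 2 * ?P) mod 8"
    by (simp add: mod_sum_eq euclid_wt_sum sum.distrib sum_distrib_left)
  also have "\<dots> = (euclid_wt x + euclid_wt y) mod 8"
    unfolding q by simp
  finally show ?thesis .
qed

corollary doubly_even_add:
  assumes "z4_inner x y = 0" and "8 dvd euclid_wt x" and "8 dvd euclid_wt y"
  shows "8 dvd euclid_wt (\<lambda>i. x i + (y i :: 4))"
  using euclid_wt_add_orth[OF assms(1)] assms(2,3) by (auto simp: dvd_eq_mod_eq_0 elim!: dvdE)

lemma doubly_even_smult:
  assumes self_orth: "z4_inner y y = 0" and wt: "8 dvd euclid_wt y"
  shows "8 dvd euclid_wt (\<lambda>l. c * y l)"
proof -
  consider "c = 0" | "c = 1" | "c = 2" | "c = 3" using z4_cases by blast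
  then show ?thesis
  proof cases
    case 1 then show ?thesis by (simp add: euclid_wt_zero)
  next
    case 2 then show ?thesis using wt by simp
  next
    case 3
    have "(\<lambda>l. c * y l) = (\<lambda>l. y l + y l)" unfolding 3 by (rule ext) (rule mult_2)
    then show ?thesis using doubly_even_add[OF self_orth wt wt] by simp
  next
    case 4
    have "(\<lambda>l. c * y l) = (\<lambda>l. - y l)"
    proof
      fix l show "c * y l = - y l" unfolding 4 using z4_cases[of "y l"] by auto
    qed
    then show ?thesis using wt by (simp add: euclid_wt_neg)
  qed
qed

section \<open>Codes defined by generators in standard form\<close>

definition res_word :: "(nat \<Rightarrow> 'n \<Rightarrow> 4) \<Rightarrow> nat \<Rightarrow> (nat \<Rightarrow> bool) \<Rightarrow> 'n \<Rightarrow> bool" where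
  "res_word g k b l \<longleftrightarrow> z4_odd (\<Sum>i<k. if b i then g i l else 0)"

locale standard_generators =
  fixes g :: "nat \<Rightarrow> 'n::finite \<Rightarrow> 4" and p :: "nat \<Rightarrow> 'n" and k :: nat
  assumes pivot: "\<And>i j. i < k \<Longrightarrow> j < k \<Longrightarrow> g i (p j) = (if i = j then 1 else 0)"
    and gens_orth: "\<And>i j. i < k \<Longrightarrow> j < k \<Longrightarrow> z4_inner (g i) (g j) = 0"
begin

definition lift :: "('n \<Rightarrow> 4) \<Rightarrow> 'n \<Rightarrow> 4" where
  "lift x = (\<lambda>l. \<Sum>i<k. x (p i) * g i l)"

definition gen_code :: "('n \<Rightarrow> 4) set" where
  "gen_code = {x. (\<forall>i<k. z4_inner (g i) x = 0) \<and> (\<forall>l. 2 * (x l - lift x l) = 0)}"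

lemma gen_codeI:
  "(\<And>i. i < k \<Longrightarrow> z4_inner (g i) x = 0) \<Longrightarrow> (\<And>l. 2 * (x l - lift x l) = 0) \<Longrightarrow> x \<in> gen_code"
  unfolding gen_code_def by blast

lemma gen_code_orth_gens: "x \<in> gen_code \<Longrightarrow> i < k \<Longrightarrow> z4_inner (g i) x = 0"
  unfolding gen_code_def by blast

lemma gen_code_rest_even: "x \<in> gen_code \<Longrightarrow> x l - lift x l = 0 \<or> x l - lift x l = 2"
  unfolding gen_code_def two_times_z4_eq_0[symmetric] by blast

lemma lift_add: "lift (\<lambda>l. x l + y l) = (\<lambda>l. lift x l + lift y l)"
  by (simp add: lift_def algebra_simps sum.distrib)

lemma lift_smult: "lift (\<lambda>l. a * x l) = (\<lambda>l. a * lift x l)"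
  by (simp add: lift_def algebra_simps sum_distrib_left)

lemma even_vec_in_gen_code:
  assumes "\<And>l. 2 * x l = 0" and "\<And>i. i < k \<Longrightarrow> z4_inner (g i) x = 0"
  shows "x \<in> gen_code"
proof (rule gen_codeI)
  fix l
  have "2 * (x l - lift x l) = 2 * x l - (\<Sum>i<k. (2 * x (p i)) * g i l)"
    by (simp add: lift_def right_diff_distrib sum_distrib_left mult.assoc)
  then show "2 * (x l - lift x l) = 0" by (simp only: assms(1)) simp
qed (rule assms(2))

lemma gen_code_add: assumes x: "x \<in> gen_code" and y: "y \<in> gen_code"
  shows "(\<lambda>l. x l + y l) \<in> gen_code"
proof (rule gen_codeI)
  fix l
  have "2 * (x l + y l - lift (\<lambda>l. x l + y l) l) = 2 * (x l - lift x l) + 2 * (y l - lift y l)"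
    by (simp add: lift_add algebra_simps)
  also have "\<dots> = 0" using x y unfolding gen_code_def by simp
  finally show "2 * (x l + y l - lift (\<lambda>l. x l + y l) l) = 0" .
qed (simp add: inner_add_right gen_code_orth_gens[OF x] gen_code_orth_gens[OF y])

lemma gen_code_smult: assumes x: "x \<in> gen_code" shows "(\<lambda>l. a * x l) \<in> gen_code"
proof (rule gen_codeI)
  fix l
  have "2 * (a * x l - lift (\<lambda>l. a * x l) l) = a * (2 * (x l - lift x l))"
    by (simp add: lift_smult algebra_simps)
  also have "\<dots> = 0" using x unfolding gen_code_def by simp
  finally show "2 * (a * x l - lift (\<lambda>l. a * x l) l) = 0" .
qed (simp add: inner_smult_right gen_code_orth_gens[OF x])

lemma zero_in_gen_code: "(\<lambda>i. 0) \<in> gen_code"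
  by (rule gen_codeI) (simp_all add: z4_inner_def lift_def)

lemma gen_code_is_code: "z4_code gen_code"
  unfolding z4_code_def using zero_in_gen_code gen_code_add gen_code_smult by blast

lemma gen_code_diff: "x \<in> gen_code \<Longrightarrow> y \<in> gen_code \<Longrightarrow> (\<lambda>l. x l - y l) \<in> gen_code"
  using gen_code_add[of x "\<lambda>l. (-1) * y l"] gen_code_smult[of y "-1"] by simp

lemma sum_pivot: "i < k \<Longrightarrow> (\<Sum>j<k. g i (p j) * f j) = f i"
proof -
  assume i: "i < k"
  have "(\<Sum>j<k. g i (p j) * f j) = (\<Sum>j<k. if i = j then f j else 0)"
    by (rule sum.cong) (auto simp: pivot i)
  then show ?thesis using i by simp
qed

lemma span_in_gen_code: "(\<lambda>l. \<Sum>i<k. c i * g i l) \<in> gen_code"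
proof (rule gen_codeI)
  fix j assume "j < k"
  then show "z4_inner (g j) (\<lambda>l. \<Sum>i<k. c i * g i l) = 0"
    by (simp add: inner_comm[of "g j"] inner_sum_left gens_orth)
next
  fix l
  have "(\<Sum>j<k. (\<Sum>i<k. c i * g i (p j)) * g j l) = (\<Sum>j<k. \<Sum>i<k. c i * (g i (p j) * g j l))"
    by (simp add: sum_distrib_right mult.assoc)
  also have "\<dots> = (\<Sum>i<k. \<Sum>j<k. c i * (g i (p j) * g j l))" by (rule sum.swap)
  also have "\<dots> = (\<Sum>i<k. c i * g i l)" by (simp add: sum_distrib_left[symmetric] sum_pivot)
  finally show "2 * ((\<Sum>i<k. c i * g i l) - lift (\<lambda>l. \<Sum>i<k. c i * g i l) l) = 0"
    by (simp add: lift_def)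
qed

lemma lift_in_gen_code: "lift x \<in> gen_code"
  unfolding lift_def by (rule span_in_gen_code)

lemma gen_in_gen_code: assumes i: "i < k" shows "g i \<in> gen_code"
proof -
  have "(\<Sum>j<k. (if j = i then 1 else 0) * g j l) = g i l" for l
    using i by (simp add: if_distrib[of "\<lambda>c. c * _"] cong: if_cong)
  then show ?thesis using span_in_gen_code[of "\<lambda>j. if j = i then 1 else 0"] by simp
qed

lemma gen_code_split:
  assumes "x \<in> gen_code"
  obtains z where "z \<in> gen_code" "\<And>l. z l = 0 \<or> z l = 2" "x = (\<lambda>l. lift x l + z l)"
proof (rule that)
  show "(\<lambda>l. x l - lift x l) \<in> gen_code" using gen_code_diff[OF assms lift_in_gen_code] .
qed (use gen_code_rest_even[OF assms] in auto)

text \<open>Any two code vectors are orthogonal: lifts are orthogonal to the whole code, and two vectors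
  with entries in {0,2} are orthogonal.\<close>
lemma self_orthogonal: assumes x: "x \<in> gen_code" and y: "y \<in> gen_code" shows "z4_inner x y = 0"
proof -
  have lift_orth: "z4_inner (lift u) v = 0" if "v \<in> gen_code" for u v
    using that by (simp add: lift_def inner_sum_left gen_code_orth_gens)
  obtain zx where zx: "zx \<in> gen_code" "\<And>l. zx l = 0 \<or> zx l = 2" "x = (\<lambda>l. lift x l + zx l)"
    using gen_code_split[OF x] by blast
  obtain zy where zy: "zy \<in> gen_code" "\<And>l. zy l = 0 \<or> zy l = 2" "y = (\<lambda>l. lift y l + zy l)"
    using gen_code_split[OF y] by blast
  have "z4_inner x y = z4_inner zx y"
    by (subst zx(3)) (simp add: inner_add_left lift_orth[OF y])
  also have "\<dots> = z4_inner zy zx"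
    by (subst zy(3)) (simp add: inner_comm[of zx] inner_add_left lift_orth[OF zx(1)])
  also have "\<dots> = 0"
  proof -
    have "zy l * zx l = 0" for l using zx(2)[of l] zy(2)[of l] by auto
    then show ?thesis by (simp add: z4_inner_def)
  qed
  finally show ?thesis .
qed

text \<open>It lies in the code, and pairing
  with it detects the congruence condition defining the code.\<close>
definition probe :: "'n \<Rightarrow> 'n \<Rightarrow> 4" where
  "probe l = (\<lambda>m. (if m = l then 2 else 0) + (\<Sum>i<k. if m = p i then 2 * g i l else 0))"

lemma inner_probe: "z4_inner (probe l) y = 2 * (y l + (\<Sum>i<k. g i l * y (p i)))"
proof -
  have swap: "(\<Sum>m\<in>UNIV. \<Sum>i<k. if m = p i then 2 * g i l * y (p i) else 0) = (\<Sum>i<k. 2 * g i l * y (p i))"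
    by (subst sum.swap) simp
  have "z4_inner (probe l) y = (\<Sum>m\<in>UNIV. (if m = l then 2 * y m else 0)
                                 + (\<Sum>i<k. if m = p i then 2 * g i l * y (p i) else 0))"
    unfolding z4_inner_def probe_def
    by (rule sum.cong) (auto simp: distrib_right sum_distrib_right intro!: sum.cong)
  also have "\<dots> = 2 * y l + (\<Sum>i<k. 2 * g i l * y (p i))"
    by (simp add: sum.distrib swap)
  finally show ?thesis by (simp add: distrib_left sum_distrib_left mult.assoc)
qed

lemma probe_in_gen_code: "probe l \<in> gen_code"
proof (rule even_vec_in_gen_code)
  fix m
  have "2 * (2 * a) = (0::4)" for a by (simp add: mult.assoc[symmetric])
  then show "2 * probe l m = 0"
    by (simp add: probe_def distrib_left sum_distrib_left if_distrib cong: if_cong)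
next
  fix j assume j: "j < k"
  have "(\<Sum>i<k. g i l * g j (p i)) = g j l"
    using sum_pivot[OF j, of "\<lambda>i. g i l"] by (simp add: mult.commute)
  then have "z4_inner (probe l) (g j) = 4 * g j l" by (simp add: inner_probe)
  then show "z4_inner (g j) (probe l) = 0" by (simp add: inner_comm)
qed

text \<open>Self-duality: a vector orthogonal to the code is orthogonal to the generators and to all
  probe vectors, which yields the congruence condition.\<close>
theorem gen_code_self_dual: "z4_self_dual gen_code"
  unfolding z4_self_dual_def
proof (intro conjI gen_code_is_code equalityI subsetI)
  fix x assume "x \<in> gen_code"
  then show "x \<in> z4_dual gen_code" using self_orthogonal by (auto simp: z4_dual_def inner_comm)
next
  fix y assume "y \<in> z4_dual gen_code"
  then have orth: "\<And>x. x \<in> gen_code \<Longrightarrow> z4_inner x y = 0" by (simp add: z4_dual_def)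
  show "y \<in> gen_code"
  proof (rule gen_codeI)
    fix i assume "i < k" then show "z4_inner (g i) y = 0" using orth gen_in_gen_code by blast
  next
    fix l
    have "2 * (y l + (\<Sum>i<k. g i l * y (p i))) = 0"
      using orth[OF probe_in_gen_code] by (simp add: inner_probe)
    moreover have "2 * (y l - lift y l) = 2 * (y l + (\<Sum>i<k. g i l * y (p i))) - 4 * (\<Sum>i<k. g i l * y (p i))"
      by (simp add: lift_def algebra_simps)
    ultimately show "2 * (y l - lift y l) = 0" by simp
  qed
qed

lemma odd_entries_res_word: "x \<in> gen_code \<Longrightarrow> z4_odd (x l) = res_word g k (\<lambda>i. z4_odd (x (p i))) l"
proof -
  assume x: "x \<in> gen_code"
  have "z4_odd (x l) = z4_odd (lift x l + (x l - lift x l))" by simp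
  also have "\<dots> = z4_odd (lift x l)" using gen_code_rest_even[OF x] z4_odd_add_even by blast
  also have "\<dots> = res_word g k (\<lambda>i. z4_odd (x (p i))) l"
    unfolding lift_def res_word_def by (rule z4_odd_sum_cong) (simp add: z4_odd_mult)
  finally show ?thesis .
qed

lemma residue_gen_code: "(\<lambda>x l. z4_odd (x l)) ` gen_code = range (res_word g k)"
proof (intro equalityI subsetI)
  fix r assume "r \<in> (\<lambda>x l. z4_odd (x l)) ` gen_code"
  then obtain x where "x \<in> gen_code" "r = (\<lambda>l. z4_odd (x l))" by blast
  then show "r \<in> range (res_word g k)" using odd_entries_res_word by blast
next
  fix r assume "r \<in> range (res_word g k)"
  then obtain b where r: "r = res_word g k b" by blast
  define y where "y = (\<lambda>l. \<Sum>i<k. (if b i then 1 else 0) * g i l)"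
  have "y l = (\<Sum>i<k. if b i then g i l else 0)" for l unfolding y_def by (rule sum.cong) simp_all
  then have "r = (\<lambda>l. z4_odd (y l))" by (simp add: r res_word_def fun_eq_iff)
  moreover have "y \<in> gen_code" unfolding y_def by (rule span_in_gen_code)
  ultimately show "r \<in> (\<lambda>x l. z4_odd (x l)) ` gen_code" by blast
qed

end

section \<open>Extremal Type II codes from generators\<close>

text \<open>Sufficient conditions for the code to be Type II with minimum Euclidean weight 16:
  doubly even generators, the all-ones word in the residue code, residue code of minimum
  weight 16, pairwise distinct columns of the residue code (so that the torsion code has no
  word of weight 2), and a code vector of weight 16.\<close>
locale extremal_generators = standard_generators g p k for g :: "nat \<Rightarrow> 'n::finite \<Rightarrow> 4" and p k +
  assumes gens_wt8: "\<And>i. i < k \<Longrightarrow> 8 dvd euclid_wt (g i)"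
    and ones_in_residue: "res_word g k (\<lambda>i. True) = (\<lambda>l. True)"
    and residue_min_wt: "\<And>b. res_word g k b \<noteq> (\<lambda>l. False) \<Longrightarrow> 16 \<le> card {l. res_word g k b l}"
    and residue_columns_distinct: "\<And>l l'. l \<noteq> l' \<Longrightarrow> \<exists>i<k. z4_odd (g i l) \<noteq> z4_odd (g i l')"
    and wt16_vector: "\<exists>w\<in>gen_code. euclid_wt w = 16"
begin

lemma partial_span_doubly_even:
  "m \<le> k \<Longrightarrow> (\<lambda>l. \<Sum>i<m. c i * g i l) \<in> gen_code \<and> 8 dvd euclid_wt (\<lambda>l. \<Sum>i<m. c i * g i l)"
proof (induction m)
  case 0 then show ?case using zero_in_gen_code by (simp add: euclid_wt_zero)
next
  case (Suc m)
  then have IH: "(\<lambda>l. \<Sum>i<m. c i * g i l) \<in> gen_code" "8 dvd euclid_wt (\<lambda>l. \<Sum>i<m. c i * g i l)"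
    and m: "m < k" by auto
  have gm: "(\<lambda>l. c m * g m l) \<in> gen_code" by (rule gen_code_smult[OF gen_in_gen_code[OF m]])
  have "8 dvd euclid_wt (\<lambda>l. c m * g m l)"
    using m by (intro doubly_even_smult gens_orth gens_wt8)
  then have "8 dvd euclid_wt (\<lambda>l. (\<Sum>i<m. c i * g i l) + c m * g m l)"
    using IH by (intro doubly_even_add self_orthogonal gm)
  then show ?case using gen_code_add[OF IH(1) gm] by simp
qed

text \<open>Pairing with the all-ones combination of the generators, whose entries are all odd,
  shows that a code vector with entries in {0,2} has an even number of 2s.\<close>
lemma even_vec_card_even:
  assumes x: "x \<in> gen_code" and ev: "\<And>l. x l = 0 \<or> x l = 2"
  shows "even (card {l. x l = 2})"
proof -
  have ones: "z4_odd (\<Sum>i<k. g i l)" for l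
    using fun_cong[OF ones_in_residue, of l] by (simp add: res_word_def)
  have "(\<Sum>i<k. 1 * g i l) * x l = (if x l = 2 then 2 else 0)" for l
  proof -
    have "(\<Sum>i<k. g i l) * 2 = 2" using two_times_z4[of "\<Sum>i<k. g i l"] ones[of l] by (simp add: mult.commute)
    then show ?thesis using ev[of l] by auto
  qed
  then have "z4_inner (\<lambda>l. \<Sum>i<k. 1 * g i l) x = (\<Sum>l\<in>{l. x l = 2}. 2)"
    by (simp add: z4_inner_def sum.If_cases)
  also have "\<dots> = of_nat (2 * card {l. x l = 2})" by (simp add: mult.commute)
  finally have "(of_nat (2 * card {l. x l = 2}) :: 4) = 0"
    using self_orthogonal[OF span_in_gen_code[of "\<lambda>i. 1"] x] by simp
  then obtain q where "2 * card {l. x l = 2} = 4 * q" unfolding of_nat_z4_eq_0 by (auto elim: dvdE)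
  then show ?thesis by simp
qed

text \<open>The code is Type II: a code vector is its lift (doubly even) plus an orthogonal vector
  with entries in {0,2} and an even number of 2s.\<close>
theorem gen_code_doubly_even: assumes x: "x \<in> gen_code" shows "8 dvd euclid_wt x"
proof -
  obtain z where z: "z \<in> gen_code" "\<And>l. z l = 0 \<or> z l = 2" "x = (\<lambda>l. lift x l + z l)"
    using gen_code_split[OF x] by blast
  have "8 dvd euclid_wt (lift x)"
    using partial_span_doubly_even[of k] by (simp add: lift_def)
  moreover have "8 dvd euclid_wt z"
  proof -
    have "euclid_wt z = 4 * card {l. z l = 2}" by (rule euclid_wt_even_vec) (rule z(2))
    then show ?thesis using even_vec_card_even[OF z(1,2)] by (auto elim!: evenE)
  qed
  ultimately show ?thesis
    using doubly_even_add[OF self_orthogonal[OF lift_in_gen_code z(1)]] z(3) by metis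
qed

text \<open>The torsion code has no word of weight 2: such a word would make two residue
  columns equal.\<close>
lemma no_two_twos:
  assumes x: "x \<in> gen_code" and ev: "\<And>l. x l = 0 \<or> x l = 2"
  shows "card {l. x l = 2} \<noteq> 2"
proof
  assume "card {l. x l = 2} = 2"
  then obtain a c where ac: "{l. x l = 2} = {a, c}" "a \<noteq> c" by (auto simp: card_2_iff)
  obtain i where i: "i < k" "z4_odd (g i a) \<noteq> z4_odd (g i c)"
    using residue_columns_distinct[OF ac(2)] by blast
  have "g i l * x l = (if x l = 2 then 2 * g i l else 0)" for l
    using ev[of l] by (auto simp: mult.commute)
  then have "z4_inner (g i) x = (\<Sum>l\<in>{l. x l = 2}. 2 * g i l)"
    by (simp add: z4_inner_def sum.If_cases)
  also have "\<dots> = 2 * (g i a + g i c)" using ac by (simp add: distrib_left)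
  finally have "2 * (g i a + g i c) = 0" using gen_code_orth_gens[OF x i(1)] by simp
  then show False using i(2) two_times_z4[of "g i a + g i c"] by (auto simp: z4_odd_add split: if_splits)
qed

text \<open>Minimum weight: a code vector with odd entries has at least 16 of them (residue code),
  and a nonzero vector with entries in {0,2} has at least four 2s (torsion code).\<close>
lemma gen_code_min_wt:
  assumes x: "x \<in> gen_code" and nz: "x \<noteq> (\<lambda>i. 0)"
  shows "16 \<le> euclid_wt x"
proof (cases "\<exists>l. z4_odd (x l)")
  case True
  define b where "b = (\<lambda>i. z4_odd (x (p i)))"
  have res: "z4_odd (x l) = res_word g k b l" for l
    unfolding b_def by (rule odd_entries_res_word[OF x])
  have "res_word g k b \<noteq> (\<lambda>l. False)" using True res by auto
  then have "16 \<le> card {l. res_word g k b l}" by (rule residue_min_wt)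
  also have "\<dots> = card {l. z4_odd (x l)}" using res by simp
  also have "\<dots> \<le> euclid_wt x" by (rule card_odd_le_euclid_wt)
  finally show ?thesis .
next
  case False
  then have ev: "x l = 0 \<or> x l = 2" for l using z4_even_iff by blast
  define N where "N = card {l. x l = 2}"
  have "N \<noteq> 0"
  proof
    assume "N = 0"
    then have "x l = 0" for l using ev[of l] by (auto simp: N_def)
    then show False using nz by auto
  qed
  moreover have "even N" "N \<noteq> 2" unfolding N_def by (fact even_vec_card_even[OF x ev] no_two_twos[OF x ev])+
  ultimately have "4 \<le> N" by presburger
  moreover have "euclid_wt x = 4 * N" unfolding N_def by (rule euclid_wt_even_vec) (rule ev)
  ultimately show ?thesis by simp
qed

lemma min_euclid_wt_gen_code: "min_euclid_wt gen_code = 16"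
  unfolding min_euclid_wt_def
proof (rule Min_eqI)
  obtain w where w: "w \<in> gen_code" "euclid_wt w = 16" using wt16_vector by blast
  have "w \<noteq> (\<lambda>i. 0)"
  proof
    assume "w = (\<lambda>i. 0)"
    then show False using w(2) by (simp add: euclid_wt_zero)
  qed
  then show "16 \<in> {euclid_wt x |x. x \<in> gen_code \<and> x \<noteq> (\<lambda>i. 0)}" using w by force
qed (use gen_code_min_wt in auto)

theorem gen_code_extremal:
  assumes "CARD('n) div 24 = 1"
  shows "extremal_type_II gen_code"
  using assms gen_code_self_dual gen_code_doubly_even min_euclid_wt_gen_code
  by (simp add: extremal_type_II_def type_II_def)

end

section \<open>An invariant of the residue code\<close>

text \<open>For a set of words with a weight and a distance function: the number of words of
  weight 16 having exactly 14 words of weight 16 at distance 16.  It is stated generically so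
  that it applies both to binary vectors and to their list representations.\<close>
definition nbr_count :: "('w \<Rightarrow> nat) \<Rightarrow> ('w \<Rightarrow> 'w \<Rightarrow> nat) \<Rightarrow> 'w set \<Rightarrow> nat" where
  "nbr_count wt dist R =
     card {r \<in> R. wt r = 16 \<and> card {s \<in> R. wt s = 16 \<and> dist r s = 16} = 14}"

lemma nbr_count_image:
  assumes inj: "inj_on f R"
    and wt: "\<And>r. r \<in> R \<Longrightarrow> wt' (f r) = wt r"
    and dist: "\<And>r s. r \<in> R \<Longrightarrow> s \<in> R \<Longrightarrow> dist' (f r) (f s) = dist r s"
  shows "nbr_count wt' dist' (f ` R) = nbr_count wt dist R"
proof -
  have card_img: "card (f ` X) = card X" if "X \<subseteq> R" for X
    using card_image inj_on_subset[OF inj that] by blast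
  have nbrs: "{s \<in> f ` R. wt' s = 16 \<and> dist' (f r) s = 16} = f ` {s \<in> R. wt s = 16 \<and> dist r s = 16}"
    if "r \<in> R" for r
    using that wt dist by auto
  have "{r \<in> f ` R. wt' r = 16 \<and> card {s \<in> f ` R. wt' s = 16 \<and> dist' r s = 16} = 14}
      = f ` {r \<in> R. wt r = 16 \<and> card {s \<in> R. wt s = 16 \<and> dist r s = 16} = 14}"
    using wt nbrs card_img by (auto simp: image_iff)
  then show ?thesis unfolding nbr_count_def by (simp add: card_img)
qed

text \<open>Evaluation on a list: only the words of weight 16 matter, and for a list without
  repetitions cardinalities become lengths of filtered lists.\<close>
definition nbr_count_list :: "('w \<Rightarrow> 'w \<Rightarrow> nat) \<Rightarrow> 'w list \<Rightarrow> nat" where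
  "nbr_count_list dist W = length (filter (\<lambda>r. length (filter (\<lambda>s. dist r s = 16) W) = 14) W)"

lemma nbr_count_list_correct:
  "nbr_count wt dist (set W) = nbr_count_list dist (remdups (filter (\<lambda>w. wt w = 16) W))"
proof -
  let ?W16 = "remdups (filter (\<lambda>w. wt w = 16) W)"
  have set16: "set ?W16 = {w \<in> set W. wt w = 16}" by auto
  have nbrs: "length (filter (\<lambda>s. dist r s = 16) ?W16) = card {s \<in> set W. wt s = 16 \<and> dist r s = 16}" for r
    unfolding distinct_length_filter[OF distinct_remdups] set16 by (rule arg_cong[where f = card]) auto
  have "nbr_count_list dist ?W16 = card ({r. length (filter (\<lambda>s. dist r s = 16) ?W16) = 14} \<inter> set ?W16)"
    unfolding nbr_count_list_def by (rule distinct_length_filter[OF distinct_remdups])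
  also have "\<dots> = nbr_count wt dist (set W)"
    unfolding nbr_count_def set16 nbrs by (rule arg_cong[where f = card]) auto
  finally show ?thesis by simp
qed

definition bin_wt :: "('n::finite \<Rightarrow> bool) \<Rightarrow> nat" where
  "bin_wt r = card {l. r l}"

definition bin_dist :: "('n::finite \<Rightarrow> bool) \<Rightarrow> ('n \<Rightarrow> bool) \<Rightarrow> nat" where
  "bin_dist r s = card {l. r l \<noteq> s l}"

definition residue_invariant :: "('n::finite \<Rightarrow> 4) set \<Rightarrow> nat" where
  "residue_invariant C = nbr_count bin_wt bin_dist ((\<lambda>x l. z4_odd (x l)) ` C)"

lemma card_bij_pred: "bij (\<sigma>::'n \<Rightarrow> 'n) \<Longrightarrow> card {l. P (\<sigma> l)} = card {l. P l}"
proof -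
  assume b: "bij \<sigma>"
  have "\<sigma> ` {l. P (\<sigma> l)} = {l. P l}" using b by (auto simp: bij_def surj_def)
  moreover have "inj_on \<sigma> {l. P (\<sigma> l)}" using b by (simp add: bij_def inj_on_def inj_def)
  ultimately show ?thesis by (metis card_image)
qed

text \<open>Monomial equivalence permutes the coordinates of residue words (signs do not change
  parity), so the invariant does not change.\<close>
theorem residue_invariant_equiv:
  fixes C D :: "('n::finite \<Rightarrow> 4) set"
  assumes "z4_equiv C D"
  shows "residue_invariant D = residue_invariant C"
proof -
  obtain \<sigma> \<epsilon> where \<sigma>: "bij \<sigma>" and \<epsilon>: "\<forall>i. \<epsilon> i = (1::4) \<or> \<epsilon> i = -1"
    and D: "D = (\<lambda>x. \<lambda>i. \<epsilon> i * x (\<sigma> i)) ` C"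
    using assms unfolding z4_equiv_def by blast
  have "z4_odd (\<epsilon> i)" for i
    using \<epsilon> z4_odd_neg[of 1] by (auto simp: z4_odd_def)
  then have odd_sign: "z4_odd (\<epsilon> i * a) = z4_odd a" for i a by (simp add: z4_odd_mult)
  have inj: "inj (\<lambda>r::'n \<Rightarrow> bool. r \<circ> \<sigma>)"
  proof (rule injI)
    fix r s :: "'n \<Rightarrow> bool" assume "r \<circ> \<sigma> = s \<circ> \<sigma>"
    then show "r = s" using \<sigma> by (metis bij_is_surj comp_apply ext surj_f_inv_f)
  qed
  have "(\<lambda>x l. z4_odd (x l)) ` D = (\<lambda>r. r \<circ> \<sigma>) ` ((\<lambda>x l. z4_odd (x l)) ` C)"
    unfolding D by (simp add: image_image odd_sign comp_def)
  moreover have "nbr_count bin_wt bin_dist ((\<lambda>r. r \<circ> \<sigma>) ` R) = nbr_count bin_wt bin_dist R" for R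
  proof (rule nbr_count_image)
    show "inj_on (\<lambda>r. r \<circ> \<sigma>) R" using inj by (rule inj_on_subset) simp
    fix r s :: "'n \<Rightarrow> bool"
    show "bin_wt (r \<circ> \<sigma>) = bin_wt r"
      using card_bij_pred[OF \<sigma>, of r] by (simp add: bin_wt_def)
    show "bin_dist (r \<circ> \<sigma>) (s \<circ> \<sigma>) = bin_dist r s"
      using card_bij_pred[OF \<sigma>, of "\<lambda>l. r l \<noteq> s l"] by (simp add: bin_dist_def)
  qed
  ultimately show ?thesis unfolding residue_invariant_def by simp
qed


section \<open>Vectors of length 40 given by lists\<close>

definition idx :: "40 \<Rightarrow> nat" where
  "idx l = nat (Rep_bit0 l)"

lemma idx_lt: "idx l < 40"
  using Rep_bit0[of l] by (simp add: idx_def nat_less_iff)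

lemma idx_of_nat: "t < 40 \<Longrightarrow> idx (of_nat t) = t"
  by (simp add: idx_def bit0.of_nat_eq bit0.Abs_inverse)

lemma idx_inj: "idx l = idx l' \<Longrightarrow> l = l'"
  using Rep_bit0[of l] Rep_bit0[of l'] by (simp add: idx_def bit0.Rep_inject_sym eq_nat_nat_iff)

lemma idx_bij: "bij_betw idx (UNIV::40 set) {..<40}"
proof (rule bij_betwI')
  show "(idx x = idx y) = (x = y)" for x y using idx_inj by blast
  show "idx x \<in> {..<40}" for x using idx_lt by simp
  show "\<exists>x\<in>UNIV. y = idx x" if "y \<in> {..<40}" for y
    using that idx_of_nat[of y] by (metis UNIV_I lessThan_iff)
qed

lemma sum_idx: "(\<Sum>l\<in>UNIV. f (idx l)) = (\<Sum>t<40. f t)"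
  by (rule sum.reindex_bij_betw[OF idx_bij])

lemma card_idx: "card {l. P (idx l)} = card {t. t < 40 \<and> P t}"
proof -
  have "idx ` {l. P (idx l)} = {t. t < 40 \<and> P t}"
    using idx_lt idx_of_nat by (auto simp: image_iff) metis
  moreover have "inj_on idx {l. P (idx l)}" using idx_inj by (auto intro: inj_onI)
  ultimately show ?thesis by (metis card_image)
qed

definition vec_of :: "nat list \<Rightarrow> 40 \<Rightarrow> 4" where
  "vec_of L l = of_nat (L ! idx l)"

definition word_of :: "bool list \<Rightarrow> 40 \<Rightarrow> bool" where
  "word_of L l = L ! idx l"

definition sym_wt_nat :: "nat \<Rightarrow> nat" where
  "sym_wt_nat n = (if n mod 4 = 1 \<or> n mod 4 = 3 then 1 else if n mod 4 = 2 then 4 else 0)"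

lemma sym_wt_of_nat: "sym_wt (of_nat n) = sym_wt_nat n"
proof -
  have "n mod 4 = 0 \<or> n mod 4 = 1 \<or> n mod 4 = 2 \<or> n mod 4 = 3" by auto
  then show ?thesis by (subst of_nat_z4_mod) (auto simp: sym_wt_def sym_wt_nat_def)
qed

lemma inner_vec_of:
  "length L = 40 \<Longrightarrow> length L' = 40 \<Longrightarrow> z4_inner (vec_of L) (vec_of L') = of_nat (sum_list (map2 (*) L L'))"
  by (simp add: z4_inner_def vec_of_def sum_idx[of "\<lambda>t. of_nat (L!t) * of_nat (L'!t)"]
      sum_list_sum_nth atLeast0LessThan of_nat_sum)

lemma euclid_wt_vec_of: "length L = 40 \<Longrightarrow> euclid_wt (vec_of L) = sum_list (map sym_wt_nat L)"
  by (simp add: euclid_wt_sum vec_of_def sym_wt_of_nat sum_idx[of "\<lambda>t. sym_wt_nat (L ! t)"]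
      sum_list_sum_nth atLeast0LessThan)

lemma bin_wt_word_of: "length L = 40 \<Longrightarrow> bin_wt (word_of L) = length (filter id L)"
  by (simp add: bin_wt_def word_of_def card_idx length_filter_conv_card)

lemma bin_dist_word_of:
  "length L = 40 \<Longrightarrow> length L' = 40 \<Longrightarrow> bin_dist (word_of L) (word_of L') = length (filter id (map2 (\<noteq>) L L'))"
  unfolding bin_dist_def word_of_def card_idx[of "\<lambda>t. L!t \<noteq> L'!t"]
  by (simp add: length_filter_conv_card cong: conj_cong)

lemma word_of_inj:
  assumes "length L = 40" "length L' = 40" "word_of L = word_of L'"
  shows "L = L'"
proof (rule nth_equalityI)
  fix t assume "t < length L"
  then have "t < 40" using assms by simp
  then show "L ! t = L' ! t" using fun_cong[OF assms(3), of "of_nat t"] by (simp add: word_of_def idx_of_nat)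
qed (use assms in simp)

section \<open>Executable description of the residue code\<close>

fun sel_bit :: "bool list list \<Rightarrow> (nat \<Rightarrow> bool) \<Rightarrow> nat \<Rightarrow> bool" where
  "sel_bit [] b t = False"
| "sel_bit (r # rs) b t = ((b 0 \<and> r ! t) \<noteq> sel_bit rs (\<lambda>i. b (Suc i)) t)"

definition sel_word :: "bool list list \<Rightarrow> (nat \<Rightarrow> bool) \<Rightarrow> bool list" where
  "sel_word rs b = map (sel_bit rs b) [0..<40]"

text \<open>For evaluation, binary words of length 40 are stored as lists of 20 pairs of bits; this
  halves the length of the lists traversed when all pairs of codewords are compared.\<close>
fun pack :: "bool list \<Rightarrow> (bool \<times> bool) list" where
  "pack (a # b # xs) = (a, b) # pack xs"
| "pack _ = []"

fun xor2 :: "(bool \<times> bool) list \<Rightarrow> (bool \<times> bool) list \<Rightarrow> (bool \<times> bool) list" where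
  "xor2 ((a, b) # xs) ((c, d) # ys) = (a \<noteq> c, b \<noteq> d) # xor2 xs ys"
| "xor2 _ _ = []"

fun wt2 :: "(bool \<times> bool) list \<Rightarrow> nat" where
  "wt2 [] = 0"
| "wt2 ((a, b) # xs) = (if a then if b then Suc (Suc (wt2 xs)) else Suc (wt2 xs)
                        else if b then Suc (wt2 xs) else wt2 xs)"

fun dist2 :: "(bool \<times> bool) list \<Rightarrow> (bool \<times> bool) list \<Rightarrow> nat" where
  "dist2 ((a, b) # xs) ((c, d) # ys) =
     (if a = c then if b = d then dist2 xs ys else Suc (dist2 xs ys)
      else if b = d then Suc (dist2 xs ys) else Suc (Suc (dist2 xs ys)))"
| "dist2 _ _ = 0"

fun span2 :: "(bool \<times> bool) list list \<Rightarrow> (bool \<times> bool) list list" where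
  "span2 [] = [replicate 20 (False, False)]"
| "span2 (r # rs) = (let ws = span2 rs in ws @ map (xor2 r) ws)"

lemma pack_xor: "length u = length v \<Longrightarrow> pack (map2 (\<noteq>) u v) = xor2 (pack u) (pack v)"
proof (induction u arbitrary: v rule: pack.induct)
  case (1 a b xs)
  then obtain c d ys where "v = c # d # ys" by (cases v; cases "tl v") auto
  with 1 show ?case by simp
next
  case ("2_2" a)
  then obtain c where "v = [c]" by (cases v) auto
  then show ?case by simp
qed simp

lemma wt2_pack: "even (length L) \<Longrightarrow> wt2 (pack L) = length (filter id L)"
  by (induction L rule: pack.induct) auto

lemma dist2_pack:
  "length L = length L' \<Longrightarrow> even (length L) \<Longrightarrow> dist2 (pack L) (pack L') = length (filter id (map2 (\<noteq>) L L'))"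
proof (induction L arbitrary: L' rule: pack.induct)
  case (1 a b xs)
  then obtain c d ys where "L' = c # d # ys" by (cases L'; cases "tl L'") auto
  with 1 show ?case by auto
qed auto

lemma pack_inj: "length L = length L' \<Longrightarrow> even (length L) \<Longrightarrow> pack L = pack L' \<Longrightarrow> L = L'"
proof (induction L arbitrary: L' rule: pack.induct)
  case (1 a b xs)
  then obtain c d ys where "L' = c # d # ys" by (cases L'; cases "tl L'") auto
  with 1 show ?case by auto
qed auto

lemma span2_correct:
  assumes "\<forall>r\<in>set rs. length r = 40"
  shows "set (span2 (map pack rs)) = pack ` range (sel_word rs)"
  using assms
proof (induction rs)
  case Nil
  have "sel_word [] b = replicate 40 False" for b
    unfolding sel_word_def by (rule nth_equalityI) simp_all
  then show ?case by (simp add: numeral_eq_Suc image_constant_conv)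
next
  case (Cons r rs)
  then have IH: "set (span2 (map pack rs)) = pack ` range (sel_word rs)" and lr: "length r = 40" by auto
  let ?tail = "\<lambda>b i. b (Suc i)" and ?cons = "\<lambda>c b i. case i of 0 \<Rightarrow> c | Suc j \<Rightarrow> b j"
  have sel_Cons: "sel_word (r # rs) b = (if b 0 then map2 (\<noteq>) r (sel_word rs (?tail b)) else sel_word rs (?tail b))" for b
    unfolding sel_word_def by (rule nth_equalityI) (auto simp: lr)
  have xor_sel: "xor2 (pack r) (pack (sel_word rs b)) = pack (map2 (\<noteq>) r (sel_word rs b))" for b
    by (rule pack_xor[symmetric]) (simp add: lr sel_word_def)
  have "xor2 (pack r) (pack (sel_word rs b)) = pack (sel_word (r # rs) (?cons True b))" for b
    unfolding xor_sel sel_Cons by simp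
  moreover have "sel_word rs b = sel_word (r # rs) (?cons False b)" for b
    unfolding sel_Cons by simp
  moreover have "pack (sel_word (r # rs) b) \<in> set (span2 (map pack (r # rs)))" for b
    unfolding sel_Cons using IH xor_sel[symmetric] by (auto simp: Let_def)
  ultimately show ?case using IH by (auto simp: Let_def)
qed

section \<open>Verified checks on generator matrices\<close>

text \<open>A generator matrix is an 8 x 40 list of natural numbers (read modulo 4); its rows are
  the generators and the pivots are the first eight coordinates.\<close>
definition gvec :: "nat list list \<Rightarrow> nat \<Rightarrow> 40 \<Rightarrow> 4" where
  "gvec G i = vec_of (G ! i)"

definition pivot40 :: "nat \<Rightarrow> 40" where
  "pivot40 j = of_nat j"

text \<open>The checks: shape of the matrix, standard form with pairwise orthogonal rows, doubly even
  rows, odd column sums (the all-ones word lies in the residue code), and pairwise distinct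
  residue columns.\<close>
definition check_shape :: "nat list list \<Rightarrow> bool" where
  "check_shape G \<longleftrightarrow> length G = 8 \<and> (\<forall>r\<in>set G. length r = 40)"

definition check_standard :: "nat list list \<Rightarrow> bool" where
  "check_standard G \<longleftrightarrow>
     (\<forall>i\<in>set [0..<8]. \<forall>j\<in>set [0..<8]. G ! i ! j = (if i = j then 1 else 0)) \<and>
     (\<forall>r\<in>set G. \<forall>r'\<in>set G. 4 dvd sum_list (map2 (*) r r'))"

definition check_wt8 :: "nat list list \<Rightarrow> bool" where
  "check_wt8 G \<longleftrightarrow> (\<forall>r\<in>set G. 8 dvd sum_list (map sym_wt_nat r))"

definition check_ones :: "nat list list \<Rightarrow> bool" where
  "check_ones G \<longleftrightarrow> (\<forall>t\<in>set [0..<40]. odd (sum_list (map (\<lambda>r. r ! t) G)))"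

definition check_columns :: "nat list list \<Rightarrow> bool" where
  "check_columns G \<longleftrightarrow> distinct (map (\<lambda>t. map (\<lambda>r. odd (r ! t)) G) [0..<40])"

definition twos_at :: "nat list \<Rightarrow> nat list" where
  "twos_at Z = map (\<lambda>t. if t \<in> set Z then 2 else 0) [0..<40]"

definition check_witness :: "nat list list \<Rightarrow> nat list \<Rightarrow> bool" where
  "check_witness G Z \<longleftrightarrow> (\<forall>r\<in>set G. 4 dvd sum_list (map2 (*) r (twos_at Z))) \<and>
                         sum_list (map sym_wt_nat (twos_at Z)) = 16"

definition check_residue :: "nat list list \<Rightarrow> nat \<Rightarrow> bool" where
  "check_residue G v \<longleftrightarrow>
     (let W = span2 (map pack (map (map odd) G))
      in (\<forall>w\<in>set W. wt2 w = 0 \<or> 16 \<le> wt2 w) \<and>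
         nbr_count_list dist2 (remdups (filter (\<lambda>w. wt2 w = 16) W)) = v)"

definition check :: "nat list list \<Rightarrow> nat list \<Rightarrow> nat \<Rightarrow> bool" where
  "check G Z v \<longleftrightarrow> check_shape G \<and> check_standard G \<and> check_wt8 G \<and> check_ones G \<and>
                    check_columns G \<and> check_witness G Z \<and> check_residue G v"

lemma check_shape_row: "check_shape G \<Longrightarrow> i < 8 \<Longrightarrow> G ! i \<in> set G \<and> length (G ! i) = 40"
  by (simp add: check_shape_def)

lemma check_standard_generators:
  assumes "check_shape G" "check_standard G"
  shows "standard_generators (gvec G) pivot40 8"
proof
  fix i j :: nat assume ij: "i < 8" "j < 8"
  show "gvec G i (pivot40 j) = (if i = j then 1 else 0)"
    using assms(2) ij by (simp add: check_standard_def gvec_def vec_of_def pivot40_def idx_of_nat)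
  show "z4_inner (gvec G i) (gvec G j) = 0"
    using assms ij check_shape_row[OF assms(1)]
    by (simp add: check_standard_def gvec_def inner_vec_of of_nat_z4_eq_0)
qed

lemma odd_sum_sel_bit:
  assumes "\<forall>r\<in>set G. t < length r"
  shows "z4_odd (\<Sum>i<length G. if b i then (of_nat (G ! i ! t) :: 4) else 0) = sel_bit (map (map odd) G) b t"
  using assms
proof (induction G arbitrary: b)
  case (Cons r G)
  have "(\<Sum>i<length (r # G). if b i then (of_nat ((r # G) ! i ! t) :: 4) else 0)
      = (if b 0 then of_nat (r ! t) else 0) + (\<Sum>i<length G. if b (Suc i) then of_nat (G ! i ! t) else 0)"
    unfolding length_Cons sum.lessThan_Suc_shift nth_Cons_Suc by simp
  then show ?case using Cons by (simp add: z4_odd_add z4_odd_of_nat)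
qed simp

lemma res_word_gvec:
  assumes "check_shape G"
  shows "res_word (gvec G) 8 b = word_of (sel_word (map (map odd) G) b)"
proof
  fix l
  have "\<forall>r\<in>set G. idx l < length r" using assms idx_lt by (simp add: check_shape_def)
  then show "res_word (gvec G) 8 b l = word_of (sel_word (map (map odd) G) b) l"
    using odd_sum_sel_bit[of G "idx l" b] assms idx_lt[of l]
    by (simp add: res_word_def gvec_def vec_of_def word_of_def sel_word_def check_shape_def cong: if_cong)
qed

lemma check_span2:
  assumes "check_shape G"
  shows "set (span2 (map pack (map (map odd) G))) = pack ` range (sel_word (map (map odd) G))"
  using assms by (intro span2_correct) (simp add: check_shape_def)

lemma check_residue_min_wt:
  assumes shape: "check_shape G" and res: "check_residue G v"
    and nz: "res_word (gvec G) 8 b \<noteq> (\<lambda>l. False)"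
  shows "16 \<le> card {l. res_word (gvec G) 8 b l}"
proof -
  let ?w = "sel_word (map (map odd) G) b"
  have len: "length ?w = 40" by (simp add: sel_word_def)
  have "card {l. res_word (gvec G) 8 b l} = bin_wt (word_of ?w)"
    by (simp add: bin_wt_def res_word_gvec[OF shape])
  also have "\<dots> = wt2 (pack ?w)" using len by (simp add: bin_wt_word_of wt2_pack)
  finally have "card {l. res_word (gvec G) 8 b l} = wt2 (pack ?w)" .
  moreover have "card {l. res_word (gvec G) 8 b l} \<noteq> 0" using nz by auto
  moreover have "pack ?w \<in> set (span2 (map pack (map (map odd) G)))"
    using check_span2[OF shape] by blast
  ultimately show ?thesis using res by (auto simp: check_residue_def Let_def)
qed

lemma check_witness_vector:
  assumes shape: "check_shape G" and std: "check_standard G" and wit: "check_witness G Z"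
  shows "\<exists>w\<in>standard_generators.gen_code (gvec G) pivot40 8. euclid_wt w = 16"
proof
  interpret standard_generators "gvec G" pivot40 8 by (rule check_standard_generators[OF shape std])
  have len: "length (twos_at Z) = 40" by (simp add: twos_at_def)
  show "euclid_wt (vec_of (twos_at Z)) = 16"
    using wit len by (simp add: check_witness_def euclid_wt_vec_of)
  show "vec_of (twos_at Z) \<in> gen_code"
  proof (rule even_vec_in_gen_code)
    fix l show "2 * vec_of (twos_at Z) l = 0" using idx_lt[of l] by (simp add: vec_of_def twos_at_def)
  next
    fix i :: nat assume "i < 8"
    then show "z4_inner (gvec G i) (vec_of (twos_at Z)) = 0"
      using wit len check_shape_row[OF shape] by (simp add: check_witness_def gvec_def inner_vec_of of_nat_z4_eq_0)
  qed
qed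

lemma check_extremal_generators:
  assumes "check G Z v"
  shows "extremal_generators (gvec G) pivot40 8"
proof -
  have shape: "check_shape G" and std: "check_standard G" and wt8: "check_wt8 G"
    and ones: "check_ones G" and cols: "check_columns G" and wit: "check_witness G Z"
    and res: "check_residue G v"
    using assms by (simp_all add: check_def)
  have gvec_entry: "gvec G i l = of_nat (G ! i ! idx l)" for i l by (simp add: gvec_def vec_of_def)
  show ?thesis
  proof (intro extremal_generators.intro extremal_generators_axioms.intro
      check_standard_generators[OF shape std] check_witness_vector[OF shape std wit])
    fix i :: nat assume "i < 8"
    then show "8 dvd euclid_wt (gvec G i)"
      using wt8 check_shape_row[OF shape] by (simp add: check_wt8_def gvec_def euclid_wt_vec_of)
  next
    have "odd (\<Sum>i<8. G ! i ! idx l)" for l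
      using ones idx_lt[of l] shape by (simp add: check_ones_def check_shape_def sum_list_sum_nth atLeast0LessThan)
    then show "res_word (gvec G) 8 (\<lambda>i. True) = (\<lambda>l. True)"
      by (simp add: res_word_def gvec_entry fun_eq_iff z4_odd_of_nat flip: of_nat_sum)
  next
    fix b :: "nat \<Rightarrow> bool" assume "res_word (gvec G) 8 b \<noteq> (\<lambda>l. False)"
    then show "16 \<le> card {l. res_word (gvec G) 8 b l}" by (rule check_residue_min_wt[OF shape res])
  next
    fix l l' :: 40 assume "l \<noteq> l'"
    then have "idx l \<noteq> idx l'" using idx_inj by blast
    then have "map (\<lambda>r. odd (r ! idx l)) G \<noteq> map (\<lambda>r. odd (r ! idx l')) G"
      using cols idx_lt[of l] idx_lt[of l'] by (simp add: check_columns_def distinct_conv_nth)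
    then obtain i where "i < 8" "odd (G ! i ! idx l) \<noteq> odd (G ! i ! idx l')"
      using shape by (auto simp: list_eq_iff_nth_eq check_shape_def)
    then show "\<exists>i<8. z4_odd (gvec G i l) \<noteq> z4_odd (gvec G i l')"
      by (auto simp: gvec_entry z4_odd_of_nat)
  qed
qed

lemma check_residue_invariant:
  assumes "check G Z v"
  shows "residue_invariant (standard_generators.gen_code (gvec G) pivot40 8) = v"
proof -
  have shape: "check_shape G" and std: "check_standard G" and res: "check_residue G v"
    using assms by (simp_all add: check_def)
  interpret standard_generators "gvec G" pivot40 8 by (rule check_standard_generators[OF shape std])
  let ?rs = "map (map odd) G"
  let ?S = "range (sel_word ?rs)"
  let ?lwt = "\<lambda>w. length (filter id w)" and ?ldist = "\<lambda>u w. length (filter id (map2 (\<noteq>) u w))"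
  have len: "w \<in> ?S \<Longrightarrow> length w = 40" for w by (auto simp: sel_word_def)
  have "(\<lambda>x l. z4_odd (x l)) ` gen_code = word_of ` ?S"
    unfolding residue_gen_code by (auto simp: res_word_gvec[OF shape])
  then have "residue_invariant gen_code = nbr_count bin_wt bin_dist (word_of ` ?S)"
    by (simp add: residue_invariant_def)
  also have "\<dots> = nbr_count ?lwt ?ldist ?S"
  proof (rule nbr_count_image)
    show "inj_on word_of ?S" using len word_of_inj by (meson inj_onI)
  qed (simp_all add: len bin_wt_word_of bin_dist_word_of)
  also have "\<dots> = nbr_count wt2 dist2 (pack ` ?S)"
  proof (rule nbr_count_image[symmetric])
    show "inj_on pack ?S" using len pack_inj by (metis (no_types, lifting) even_numeral inj_onI)
  qed (simp_all add: len wt2_pack dist2_pack)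
  also have "\<dots> = nbr_count wt2 dist2 (set (span2 (map pack ?rs)))"
    unfolding check_span2[OF shape] ..
  also have "\<dots> = v"
    using res by (simp add: nbr_count_list_correct check_residue_def Let_def)
  finally show ?thesis .
qed

section \<open>The 37 codes\<close>

text \<open>Generator matrices of 37 codes, each with the coordinates of a weight-16 witness (its
  entries 2) and the value of the residue invariant.  Every matrix is checked by evaluation.\<close>

definition gen_matrix_0 :: "nat list list" where "gen_matrix_0 = [[1, 0, 0, 0, 0, 0, 0, 0, 1, 1, 1, 0, 1, 0, 0, 0, 1, 1, 0, 0, 1, 0, 1, 0, 0, 0, 1, 0, 1, 1, 0, 1, 0, 0, 0, 1, 1, 0, 1, 0], [0, 1, 0, 0, 0, 0, 0, 0, 0, 1, 0, 1, 1, 1, 0, 1, 0, 0, 0, 1, 1, 0, 0, 1, 0, 1, 0, 0, 1, 0, 1, 1, 0, 1, 0, 0, 0, 0, 3, 1], [0, 0, 1, 0, 0, 0, 0, 0, 1, 0, 0, 0, 0, 1, 1, 0, 0, 1, 0, 1, 1, 1, 0, 0, 1, 0, 0, 1, 1, 1, 0, 1, 0, 1, 0, 1, 1, 2, 0, 2], [0, 0, 0, 1, 0, 0, 0, 0, 0, 0, 1, 1, 0, 0, 1, 1, 1, 0, 0, 0, 1, 1, 1, 1, 0, 0, 0, 0, 0, 1, 0, 0, 1, 1, 1, 1, 0, 2, 2, 1], [0, 0, 0, 0, 1, 0, 0, 0, 1, 0, 0, 1, 1, 0, 0, 0, 0, 1, 1, 0, 0, 1, 0, 0, 0, 1, 0,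 1, 1, 1, 1, 0, 1, 3, 0, 1, 0, 1, 2, 2], [0, 0, 0, 0, 0, 1, 0, 0, 0, 1, 1, 0, 1, 0, 0, 0, 0, 1, 1, 0, 0, 1, 0, 0, 1, 0, 1, 0, 0, 2, 1, 0, 1, 1, 0, 3, 1, 2, 1, 1], [0, 0, 0, 0, 0, 0, 1, 0, 0, 0, 0, 0, 1, 1, 1, 1, 1, 0, 0, 0, 0, 0, 0, 0, 0, 0, 0, 0, 0, 0, 1, 1, 1, 1, 1, 3, 1, 3, 1, 3], [0, 0, 0, 0, 0, 0, 0, 1, 0, 0, 0, 0, 0, 0, 0, 0, 0, 1, 1, 1, 1, 1, 1, 1, 1, 1, 1, 1, 1, 1, 1, 1, 1, 3, 1, 3, 1, 3, 1, 3]]"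
lemma check_gen_matrix_0: "check gen_matrix_0 [0, 1, 5, 9] 0" by code_simp

definition gen_matrix_1 :: "nat list list" where "gen_matrix_1 = [[1, 0, 0, 0, 0, 0, 0, 0, 0, 0, 0, 0, 1, 0, 0, 1, 1, 0, 1, 0, 1, 0, 1, 1, 0, 1, 1, 0, 1, 0, 0, 1, 0, 1, 0, 0, 1, 1, 1, 0], [0, 1, 0, 0, 0, 0, 0, 0, 0, 1, 1, 1, 1, 1, 1, 0, 0, 1, 1, 0, 1, 0, 0, 0, 1, 0, 0, 1, 0, 0, 1, 0, 0, 1, 0, 1, 0, 0, 0, 1], [0, 0, 1, 0, 0, 0, 0, 0, 1, 0, 0, 1, 0, 0, 1, 0, 0, 1, 1, 0, 0, 1, 0, 1, 0, 1, 0, 1, 1, 0, 0, 0, 1, 1, 0, 1, 0, 3, 0, 1], [0, 0, 0, 1, 0, 0, 0, 0, 1, 1, 0, 1, 1, 1, 1, 1, 0, 1, 1, 1, 1, 0, 1, 0, 0, 1, 0, 1, 1, 0, 0, 0, 1, 0, 1, 1, 1, 0, 0, 2], [0, 0, 0, 0, 1, 0, 0, 0, 0, 0, 1, 1, 1, 0, 1, 0, 0, 0, 1, 0, 0, 1, 0, 0, 1, 1, 1, 0, 0, 1, 0, 0, 1, 1, 1, 1, 0, 0, 3, 0], [0, 0, 0, 0, 0, 1, 0, 0, 1, 1, 1, 1, 0, 0, 0, 0, 1, 1, 1, 1, 1, 0, 0, 0, 0, 0, 0, 1, 1, 1, 0, 0, 2, 1, 1, 1, 1, 1, 1, 3], [0,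 0, 0, 0, 0, 0, 1, 0, 0, 0, 0, 0, 1, 1, 1, 1, 1, 1, 1, 1, 1, 0, 0, 0, 0, 0, 0, 0, 0, 2, 1, 1, 1, 1, 3, 1, 1, 1, 3, 3], [0, 0, 0, 0, 0, 0, 0, 1, 0, 0, 0, 0, 0, 0, 0, 0, 0, 0, 0, 0, 2, 1, 1, 1, 1, 1, 1, 1, 1, 1, 1, 1, 1, 1, 1, 1, 1, 1, 1, 1]]"
lemma check_gen_matrix_1: "check gen_matrix_1 [0, 1, 13, 15] 5" by code_simp

definition gen_matrix_2 :: "nat list list" where "gen_matrix_2 = [[1, 0, 0, 0, 0, 0, 0, 0, 0, 1, 1, 1, 1, 0, 1, 0, 1, 0, 1, 1, 1, 1, 1, 0, 1, 0, 1, 0, 1, 0, 1, 1, 0, 1, 0, 1, 0, 0, 1, 2], [0, 1, 0, 0, 0, 0, 0, 0, 0, 1, 1, 1, 1, 0, 1, 1, 0, 1, 1, 1, 0, 1, 0, 1, 0, 0, 1, 1, 0, 1, 1, 1, 0, 0, 1, 0, 1, 0, 1, 2], [0, 0, 1, 0, 0, 0, 0, 0, 1, 1, 0, 0, 1, 1, 1, 1, 1, 0, 0, 0, 0, 0, 1, 1, 0, 1, 0, 0, 0, 1, 1, 0, 0, 1, 1, 1, 0, 0, 0, 0], [0, 0, 0, 1, 0, 0, 0, 0, 1, 0, 1, 0, 0, 1, 1, 1, 1, 0, 0, 1, 0, 0, 0, 0, 1, 1, 0, 0, 1, 1, 0, 0, 1, 0, 0, 1, 2, 2, 3, 1], [0,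 0, 0, 0, 1, 0, 0, 0, 0, 1, 1, 0, 1, 0, 0, 1, 1, 1, 1, 0, 0, 0, 0, 0, 0, 1, 1, 0, 1, 0, 0, 1, 0, 0, 0, 3, 3, 0, 3, 1], [0, 0, 0, 0, 0, 1, 0, 0, 1, 1, 0, 0, 0, 0, 0, 0, 0, 0, 1, 1, 1, 0, 0, 0, 0, 1, 1, 1, 0, 0, 0, 0, 0, 1, 1, 3, 3, 1, 1, 3], [0, 0, 0, 0, 0, 0, 1, 0, 0, 0, 1, 1, 1, 1, 1, 1, 1, 1, 1, 1, 1, 0, 0, 0, 0, 0, 0, 0, 1, 1, 1, 1, 3, 1, 1, 3, 3, 3, 3, 1], [0, 0, 0, 0, 0, 0, 0, 1, 0, 0, 0, 0, 0, 0, 0, 0, 0, 0, 0, 0, 2, 1, 1, 1, 1, 1, 1, 1, 1, 1, 1, 1, 3, 1, 1, 1, 3, 1, 3, 3]]"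
lemma check_gen_matrix_2: "check gen_matrix_2 [0, 1, 6, 11] 6" by code_simp

definition gen_matrix_3 :: "nat list list" where "gen_matrix_3 = [[1, 0, 0, 0, 0, 0, 0, 0, 1, 0, 1, 1, 1, 1, 0, 0, 0, 1, 1, 0, 0, 1, 1, 1, 0, 1, 1, 1, 0, 0, 1, 1, 0, 0, 1, 0, 2, 1, 1, 1], [0, 1, 0, 0, 0, 0, 0, 0, 0, 0, 0, 0, 1, 0, 1, 1, 0, 0, 1, 0, 1, 0, 1, 0, 0, 1, 1, 0, 1, 1, 0, 1, 1, 0, 1, 1, 0, 0, 1, 0], [0, 0, 1, 0, 0, 0, 0, 0, 1, 1, 0, 0, 0, 0, 0, 0, 1, 1, 0, 0, 1, 1, 1, 0, 1, 1, 0, 1, 1, 1, 0, 1, 0, 0, 0, 1, 0, 0, 1, 0], [0, 0, 0, 1, 0, 0, 0, 0, 1, 1, 1, 1, 0, 1, 1, 1, 0, 1, 1, 1, 1, 0, 1, 1, 1, 0, 1, 1, 1, 1, 0, 0, 0, 1, 1, 0, 0, 1, 3, 1], [0, 0, 0, 0, 1, 0, 0, 0, 0, 1, 1, 0, 1, 0, 0, 1, 1, 1, 0, 0, 1, 1, 1, 1, 0, 1, 0, 0, 1, 0, 0, 0, 1, 3, 1, 1, 1, 2, 3, 1], [0, 0, 0, 0, 0, 1, 0, 0, 0, 0, 0, 1, 1, 0, 0, 1, 0, 0, 1, 1, 0, 1, 1, 1, 0, 0, 1, 1, 0, 3, 0, 0, 1, 1, 1, 0, 0, 3, 2, 2], [0,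 0, 0, 0, 0, 0, 1, 0, 0, 0, 0, 0, 1, 1, 1, 1, 1, 1, 1, 1, 1, 0, 0, 0, 0, 0, 0, 0, 0, 2, 1, 1, 1, 1, 1, 1, 3, 1, 1, 1], [0, 0, 0, 0, 0, 0, 0, 1, 0, 0, 0, 0, 0, 0, 0, 0, 0, 0, 0, 0, 2, 1, 1, 1, 1, 1, 1, 1, 1, 1, 1, 1, 1, 3, 1, 1, 1, 1, 1, 3]]"
lemma check_gen_matrix_3: "check gen_matrix_3 [0, 1, 13, 14] 7" by code_simp

definition gen_matrix_4 :: "nat list list" where "gen_matrix_4 = [[1, 0, 0, 0, 0, 0, 0, 0, 1, 0, 1, 1, 1, 0, 1, 1, 0, 1, 1, 1, 0, 0, 1, 0, 1, 0, 0, 0, 1, 0, 1, 1, 1, 0, 1, 1, 0, 1, 2, 1], [0, 1, 0, 0, 0, 0, 0, 0, 1, 1, 0, 0, 1, 1, 1, 1, 1, 0, 1, 0, 1, 0, 0, 0, 1, 0, 0, 0, 0, 1, 0, 1, 0, 1, 1, 0, 1, 0, 0, 0], [0, 0, 1, 0, 0, 0, 0, 0, 0, 1, 1, 1, 1, 0, 0, 0, 1, 1, 1, 0, 0, 0, 0, 1, 1, 1, 1, 1, 0, 0, 0, 0, 0, 0, 0, 1, 3, 1, 0, 0], [0, 0, 0, 1, 0, 0, 0, 0, 1, 1, 0, 1, 0, 1, 1, 0, 1, 0, 1, 1, 1, 1, 0, 1, 0, 0, 0, 1, 0, 1, 1, 0, 0, 1, 1, 1, 2, 3, 0, 1], [0,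 0, 0, 0, 1, 0, 0, 0, 0, 1, 0, 1, 1, 0, 1, 0, 1, 0, 0, 0, 0, 1, 1, 0, 1, 1, 0, 1, 0, 1, 1, 1, 0, 1, 0, 0, 0, 1, 0, 0], [0, 0, 0, 0, 0, 1, 0, 0, 0, 1, 1, 1, 1, 1, 0, 0, 0, 0, 0, 0, 0, 0, 0, 0, 0, 0, 1, 1, 1, 1, 1, 3, 0, 0, 0, 0, 1, 3, 1, 3], [0, 0, 0, 0, 0, 0, 1, 0, 0, 0, 0, 0, 0, 0, 1, 1, 1, 1, 1, 1, 1, 0, 0, 0, 0, 0, 0, 0, 0, 0, 0, 0, 1, 3, 1, 1, 3, 3, 3, 3], [0, 0, 0, 0, 0, 0, 0, 1, 0, 0, 0, 0, 0, 0, 0, 0, 0, 0, 0, 0, 2, 1, 1, 1, 1, 1, 1, 1, 1, 1, 1, 1, 1, 1, 1, 1, 1, 3, 1, 3]]"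
lemma check_gen_matrix_4: "check gen_matrix_4 [0, 1, 3, 8] 8" by code_simp

definition gen_matrix_5 :: "nat list list" where "gen_matrix_5 = [[1, 0, 0, 0, 0, 0, 0, 0, 0, 0, 1, 1, 1, 1, 0, 0, 0, 0, 1, 1, 1, 0, 0, 1, 1, 1, 1, 1, 1, 1, 0, 0, 1, 1, 1, 0, 0, 2, 1, 1], [0, 1, 0, 0, 0, 0, 0, 0, 1, 0, 0, 1, 1, 0, 1, 0, 1, 1, 1, 1, 1, 1, 0, 1, 0, 1, 0, 1, 0, 0, 1, 1, 0, 1, 0, 1, 1, 0, 2, 1], [0, 0, 1, 0, 0, 0, 0, 0, 1, 1, 0, 0, 0, 0, 0, 1, 1, 0, 0, 1, 0, 1, 0, 1, 0, 1, 1, 1, 1, 0, 1, 0, 1, 0, 0, 1, 0, 2, 2, 3], [0, 0, 0, 1, 0, 0, 0, 0, 0, 1, 1, 0, 0, 1, 1, 1, 0, 1, 0, 0, 1, 0, 0, 1, 1, 1, 1, 0, 1, 0, 1, 0, 1, 1, 0, 1, 3, 2, 3, 3], [0, 0, 0, 0, 1, 0, 0, 0, 1, 0, 0, 1, 0, 1, 1, 1, 0, 0, 1, 0, 1, 1, 1, 0, 0, 1, 1, 1, 0, 0, 1, 0, 0, 0, 1, 3, 2, 2, 2, 2], [0, 0, 0, 0, 0, 1, 0, 0, 0, 1, 1, 0, 1, 0, 1, 1, 0, 0, 1, 1, 0, 1, 1, 0, 0, 1, 0, 0, 1, 1, 0, 1, 0, 2, 1, 3, 1, 1, 3, 1], [0,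 0, 0, 0, 0, 0, 1, 0, 0, 0, 0, 0, 0, 0, 1, 1, 1, 1, 1, 1, 1, 0, 0, 0, 0, 0, 0, 0, 0, 0, 0, 0, 1, 1, 1, 1, 1, 3, 3, 1], [0, 0, 0, 0, 0, 0, 0, 1, 0, 0, 0, 0, 0, 0, 0, 0, 0, 0, 0, 0, 2, 1, 1, 1, 1, 1, 1, 1, 1, 1, 1, 1, 1, 1, 1, 1, 3, 1, 1, 1]]"
lemma check_gen_matrix_5: "check gen_matrix_5 [0, 1, 4, 11] 9" by code_simp

definition gen_matrix_6 :: "nat list list" where "gen_matrix_6 = [[1, 0, 0, 0, 0, 0, 0, 0, 1, 1, 1, 0, 0, 0, 0, 0, 1, 1, 1, 0, 1, 0, 1, 0, 0, 0, 0, 1, 1, 1, 1, 0, 0, 1, 0, 0, 1, 0, 0, 1], [0, 1, 0, 0, 0, 0, 0, 0, 1, 1, 1, 1, 0, 1, 0, 0, 1, 0, 0, 1, 0, 1, 0, 1, 1, 0, 1, 0, 0, 0, 1, 0, 1, 1, 0, 0, 0, 2, 1, 2], [0, 0, 1, 0, 0, 0, 0, 0, 0, 0, 0, 1, 1, 0, 0, 1, 1, 0, 0, 0, 1, 1, 1, 0, 0, 1, 1, 1, 0, 0, 1, 1, 1, 0, 0, 0, 3, 1, 0, 0], [0, 0, 0, 1, 0, 0, 0, 0, 0, 1, 0, 1, 1, 1, 1, 1, 0, 0, 0, 0, 1, 0, 0, 1, 0, 0, 0, 0, 1, 0, 1, 1, 1, 0, 1, 1, 0, 1, 0, 0], [0,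 0, 0, 0, 1, 0, 0, 0, 1, 0, 0, 1, 0, 0, 1, 0, 1, 1, 0, 0, 0, 0, 0, 0, 1, 0, 1, 1, 1, 0, 1, 1, 0, 1, 2, 1, 2, 0, 3, 3], [0, 0, 0, 0, 0, 1, 0, 0, 0, 0, 1, 1, 1, 1, 0, 0, 0, 0, 1, 1, 1, 0, 0, 0, 0, 1, 1, 1, 0, 0, 0, 0, 0, 0, 0, 1, 1, 3, 3, 3], [0, 0, 0, 0, 0, 0, 1, 0, 0, 0, 0, 0, 0, 0, 1, 1, 1, 1, 1, 1, 1, 0, 0, 0, 0, 0, 0, 2, 1, 1, 1, 1, 1, 1, 1, 1, 3, 3, 3, 3], [0, 0, 0, 0, 0, 0, 0, 1, 0, 0, 0, 0, 0, 0, 0, 0, 0, 0, 0, 0, 2, 1, 1, 1, 1, 1, 1, 1, 1, 1, 1, 1, 1, 1, 1, 1, 1, 3, 1, 3]]"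
lemma check_gen_matrix_6: "check gen_matrix_6 [0, 1, 3, 9] 10" by code_simp

definition gen_matrix_7 :: "nat list list" where "gen_matrix_7 = [[1, 0, 0, 0, 0, 0, 0, 0, 1, 0, 0, 0, 1, 1, 1, 0, 1, 0, 1, 0, 1, 1, 1, 1, 0, 1, 1, 0, 1, 0, 1, 0, 0, 1, 1, 0, 1, 2, 1, 1], [0, 1, 0, 0, 0, 0, 0, 0, 1, 1, 1, 1, 1, 1, 1, 0, 1, 1, 0, 1, 1, 1, 0, 0, 1, 0, 0, 1, 0, 0, 0, 1, 1, 0, 1, 0, 1, 0, 1, 2], [0, 0, 1, 0, 0, 0, 0, 0, 0, 0, 1, 1, 0, 0, 1, 1, 1, 1, 1, 0, 0, 1, 1, 0, 0, 1, 0, 0, 0, 0, 0, 0, 1, 1, 0, 1, 3, 1, 2, 2], [0, 0, 0, 1, 0, 0, 0, 0, 1, 0, 1, 0, 1, 0, 0, 1, 1, 1, 1, 0, 0, 0, 0, 0, 1, 1, 1, 0, 0, 0, 1, 1, 1, 0, 0, 2, 0, 1, 2, 1], [0, 0, 0, 0, 1, 0, 0, 0, 1, 1, 1, 0, 1, 0, 1, 0, 0, 1, 1, 1, 1, 1, 0, 1, 0, 0, 1, 0, 0, 1, 1, 1, 0, 1, 1, 1, 1, 2, 0, 0], [0, 0, 0, 0, 0, 1, 0, 0, 1, 1, 1, 1, 0, 0, 0, 0, 0, 0, 0, 0, 1, 0, 0, 0, 0, 1, 1, 1, 1, 1, 0, 0, 0, 0, 0, 1, 3, 3, 1, 1], [0,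 0, 0, 0, 0, 0, 1, 0, 0, 0, 0, 0, 1, 1, 1, 1, 1, 1, 1, 1, 1, 0, 0, 0, 0, 0, 0, 0, 0, 2, 1, 1, 1, 1, 3, 3, 1, 3, 1, 1], [0, 0, 0, 0, 0, 0, 0, 1, 0, 0, 0, 0, 0, 0, 0, 0, 0, 0, 0, 0, 2, 1, 1, 1, 1, 1, 1, 1, 1, 1, 1, 1, 1, 1, 1, 1, 3, 1, 3, 1]]"
lemma check_gen_matrix_7: "check gen_matrix_7 [0, 1, 6, 13] 11" by code_simp

definition gen_matrix_8 :: "nat list list" where "gen_matrix_8 = [[1, 0, 0, 0, 0, 0, 0, 0, 1, 1, 0, 0, 1, 0, 1, 0, 1, 1, 0, 1, 0, 1, 0, 1, 1, 0, 1, 0, 0, 0, 0, 1, 0, 1, 0, 0, 1, 1, 0, 0], [0, 1, 0, 0, 0, 0, 0, 0, 1, 0, 1, 1, 0, 1, 0, 1, 0, 1, 0, 1, 1, 0, 1, 0, 1, 1, 0, 1, 0, 0, 1, 0, 1, 1, 0, 1, 2, 1, 1, 1], [0, 0, 1, 0, 0, 0, 0, 0, 0, 1, 0, 1, 1, 0, 0, 0, 0, 1, 1, 0, 1, 0, 0, 0, 1, 1, 0, 0, 1, 0, 1, 0, 0, 1, 1, 1, 0, 3, 0, 1], [0, 0, 0, 1, 0, 0, 0, 0, 0, 0, 1, 0, 0, 1, 1, 0, 0, 1, 1, 0, 0, 1, 1, 1, 0, 1, 0, 0, 0, 1, 1, 0, 0, 0, 1, 0, 3, 1, 3, 0], [0,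 0, 0, 0, 1, 0, 0, 0, 0, 1, 1, 1, 1, 0, 0, 1, 0, 0, 0, 0, 1, 1, 0, 0, 0, 0, 0, 0, 1, 1, 1, 1, 1, 0, 1, 0, 0, 0, 1, 1], [0, 0, 0, 0, 0, 1, 0, 0, 1, 0, 0, 0, 1, 0, 0, 0, 1, 0, 0, 0, 1, 1, 0, 0, 1, 1, 0, 0, 1, 1, 1, 1, 1, 0, 0, 1, 3, 3, 0, 0], [0, 0, 0, 0, 0, 0, 1, 0, 0, 0, 0, 0, 1, 1, 1, 1, 1, 0, 0, 0, 0, 0, 0, 0, 0, 2, 1, 1, 1, 1, 1, 1, 1, 1, 1, 1, 1, 1, 3, 1], [0, 0, 0, 0, 0, 0, 0, 1, 0, 0, 0, 0, 0, 0, 0, 0, 0, 1, 1, 1, 1, 1, 1, 1, 1, 1, 1, 1, 1, 1, 1, 1, 1, 1, 1, 3, 3, 1, 3, 1]]"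
lemma check_gen_matrix_8: "check gen_matrix_8 [0, 1, 5, 8] 12" by code_simp

definition gen_matrix_9 :: "nat list list" where "gen_matrix_9 = [[1, 0, 0, 0, 0, 0, 0, 0, 1, 0, 1, 0, 0, 1, 0, 0, 1, 0, 1, 1, 0, 0, 1, 0, 0, 0, 1, 1, 1, 0, 1, 0, 0, 0, 1, 1, 1, 0, 1, 0], [0, 1, 0, 0, 0, 0, 0, 0, 1, 0, 0, 1, 0, 1, 1, 1, 0, 0, 1, 0, 0, 0, 0, 0, 1, 1, 0, 0, 0, 1, 1, 1, 0, 1, 0, 1, 0, 0, 3, 1], [0, 0, 1, 0, 0, 0, 0, 0, 1, 0, 0, 0, 1, 1, 1, 1, 1, 0, 0, 0, 1, 1, 0, 0, 1, 0, 0, 0, 0, 0, 1, 1, 1, 0, 0, 0, 1, 1, 3, 0], [0, 0, 0, 1, 0, 0, 0, 0, 0, 1, 1, 1, 1, 1, 1, 0, 0, 1, 1, 1, 0, 1, 0, 1, 0, 1, 1, 0, 1, 1, 0, 0, 1, 0, 0, 1, 1, 2, 0, 1], [0, 0, 0, 0, 1, 0, 0, 0, 0, 1, 0, 0, 0, 0, 1, 0, 0, 1, 1, 0, 1, 0, 1, 0, 1, 0, 0, 1, 1, 1, 0, 1, 1, 0, 0, 0, 3, 1, 1, 0], [0, 0, 0, 0, 0, 1, 0, 0, 0, 1, 1, 1, 1, 1, 0, 0, 0, 0, 0, 0, 0, 0, 0, 1, 1, 0, 0, 0, 1, 1, 1, 1, 0, 0, 0, 0, 1, 1, 3, 1], [0,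 0, 0, 0, 0, 0, 1, 0, 0, 0, 0, 0, 0, 0, 1, 1, 1, 1, 1, 1, 1, 1, 1, 1, 1, 0, 0, 0, 0, 0, 0, 2, 1, 1, 1, 1, 1, 3, 1, 1], [0, 0, 0, 0, 0, 0, 0, 1, 0, 0, 0, 0, 0, 0, 0, 0, 0, 0, 0, 0, 0, 0, 0, 0, 0, 1, 1, 1, 1, 1, 3, 1, 1, 1, 1, 1, 1, 1, 3, 3]]"
lemma check_gen_matrix_9: "check gen_matrix_9 [0, 1, 2, 8] 13" by code_simp

definition gen_matrix_10 :: "nat list list" where "gen_matrix_10 = [[1, 0, 0, 0, 0, 0, 0, 0, 0, 1, 1, 1, 1, 1, 0, 0, 1, 0, 1, 0, 0, 1, 0, 1, 0, 1, 1, 0, 1, 0, 0, 1, 0, 0, 0, 0, 1, 1, 0, 0], [0, 1, 0, 0, 0, 0, 0, 0, 1, 0, 1, 0, 1, 0, 0, 1, 1, 1, 0, 1, 0, 0, 1, 0, 0, 0, 1, 1, 0, 0, 0, 1, 0, 1, 1, 0, 0, 3, 0, 1], [0, 0, 1, 0, 0, 0, 0, 0, 0, 0, 0, 1, 1, 0, 1, 0, 1, 0, 1, 1, 1, 1, 0, 0, 1, 1, 0, 1, 0, 1, 1, 1, 1, 0, 1, 1, 0, 1, 2, 3], [0, 0, 0, 1, 0, 0, 0, 0, 1, 1, 0, 0, 0, 0, 1, 1, 0, 0, 1, 1, 1, 0, 1, 1, 0, 1, 1, 1, 0, 0, 1, 1, 0, 0, 1, 3, 1, 1, 2, 1], [0,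 0, 0, 0, 1, 0, 0, 0, 1, 1, 0, 0, 1, 1, 0, 0, 1, 1, 1, 1, 1, 0, 0, 0, 1, 1, 1, 0, 0, 0, 1, 1, 0, 0, 0, 0, 2, 2, 0, 3], [0, 0, 0, 0, 0, 1, 0, 0, 0, 0, 1, 1, 1, 1, 0, 0, 0, 0, 0, 0, 1, 0, 0, 0, 0, 0, 0, 1, 1, 1, 1, 3, 0, 0, 0, 3, 3, 1, 1, 3], [0, 0, 0, 0, 0, 0, 1, 0, 0, 0, 0, 0, 0, 0, 1, 1, 1, 1, 1, 1, 1, 0, 0, 0, 0, 0, 0, 0, 0, 0, 0, 0, 1, 1, 3, 1, 1, 1, 1, 1], [0, 0, 0, 0, 0, 0, 0, 1, 0, 0, 0, 0, 0, 0, 0, 0, 0, 0, 0, 0, 2, 1, 1, 1, 1, 1, 1, 1, 1, 1, 1, 1, 1, 1, 1, 1, 1, 1, 3, 3]]"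
lemma check_gen_matrix_10: "check gen_matrix_10 [0, 1, 5, 10] 14" by code_simp

definition gen_matrix_11 :: "nat list list" where "gen_matrix_11 = [[1, 0, 0, 0, 0, 0, 0, 0, 1, 0, 1, 1, 1, 1, 0, 1, 1, 1, 0, 1, 1, 0, 1, 0, 1, 0, 1, 0, 1, 1, 0, 1, 0, 0, 1, 0, 1, 0, 2, 1], [0, 1, 0, 0, 0, 0, 0, 0, 0, 1, 0, 1, 1, 0, 0, 1, 1, 1, 1, 0, 0, 1, 1, 0, 1, 1, 0, 0, 1, 0, 0, 1, 1, 1, 0, 1, 2, 1, 1, 3], [0, 0, 1, 0, 0, 0, 0, 0, 1, 1, 0, 1, 1, 0, 1, 1, 1, 0, 1, 0, 1, 1, 0, 0, 0, 0, 0, 1, 1, 1, 1, 1, 1, 1, 1, 0, 0, 2, 3, 0], [0, 0, 0, 1, 0, 0, 0, 0, 0, 0, 0, 0, 1, 1, 0, 0, 1, 0, 0, 1, 1, 1, 1, 1, 1, 0, 0, 0, 1, 0, 0, 0, 1, 0, 0, 1, 1, 1, 0, 3], [0, 0, 0, 0, 1, 0, 0, 0, 1, 0, 1, 1, 0, 0, 1, 0, 1, 0, 0, 0, 1, 1, 1, 1, 0, 0, 0, 0, 1, 1, 0, 0, 0, 1, 1, 1, 2, 0, 2, 1], [0, 0, 0, 0, 0, 1, 0, 0, 0, 1, 1, 1, 0, 0, 0, 1, 1, 0, 0, 0, 0, 0, 0, 0, 1, 1, 1, 1, 1, 1, 0, 0, 0, 0, 0, 0, 3, 1, 1, 3], [0,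 0, 0, 0, 0, 0, 1, 0, 0, 0, 0, 0, 1, 1, 1, 1, 1, 0, 0, 0, 0, 0, 0, 0, 0, 0, 0, 0, 0, 0, 1, 1, 1, 1, 1, 3, 3, 3, 3, 1], [0, 0, 0, 0, 0, 0, 0, 1, 0, 0, 0, 0, 0, 0, 0, 0, 0, 1, 1, 1, 1, 1, 1, 1, 1, 1, 1, 1, 1, 1, 1, 1, 1, 1, 1, 1, 1, 1, 1, 3]]"
lemma check_gen_matrix_11: "check gen_matrix_11 [0, 1, 7, 17] 15" by code_simp

definition gen_matrix_12 :: "nat list list" where "gen_matrix_12 = [[1, 0, 0, 0, 0, 0, 0, 0, 0, 0, 0, 0, 0, 1, 1, 0, 1, 1, 1, 0, 1, 0, 0, 0, 1, 1, 1, 1, 0, 1, 0, 0, 1, 0, 0, 0, 1, 0, 1, 1], [0, 1, 0, 0, 0, 0, 0, 0, 1, 0, 1, 1, 0, 1, 1, 1, 0, 0, 1, 1, 1, 0, 0, 1, 1, 0, 0, 0, 1, 0, 1, 1, 1, 1, 0, 1, 1, 0, 3, 2], [0, 0, 1, 0, 0, 0, 0, 0, 0, 1, 0, 0, 0, 0, 0, 1, 1, 0, 1, 0, 1, 0, 1, 1, 0, 0, 0, 1, 1, 0, 1, 1, 1, 0, 1, 1, 0, 2, 1, 2], [0, 0, 0, 1, 0, 0, 0, 0, 1, 1, 1, 0, 1, 1, 0, 0, 0, 1, 1, 0, 0, 1, 0, 1, 0, 1, 0, 1, 1, 0, 1, 0, 0, 0, 1, 0, 2, 2, 1, 0], [0,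 0, 0, 0, 1, 0, 0, 0, 1, 1, 0, 1, 1, 1, 0, 0, 0, 0, 0, 1, 1, 1, 0, 0, 1, 0, 1, 1, 1, 0, 0, 1, 0, 0, 1, 0, 2, 2, 0, 1], [0, 0, 0, 0, 0, 1, 0, 0, 0, 0, 1, 1, 1, 1, 0, 0, 0, 0, 0, 0, 0, 0, 1, 1, 1, 0, 0, 0, 0, 1, 1, 3, 0, 0, 0, 3, 1, 1, 3, 1], [0, 0, 0, 0, 0, 0, 1, 0, 0, 0, 0, 0, 0, 0, 1, 1, 1, 1, 1, 1, 1, 1, 1, 1, 1, 0, 0, 0, 0, 0, 0, 2, 1, 1, 3, 3, 1, 3, 1, 3], [0, 0, 0, 0, 0, 0, 0, 1, 0, 0, 0, 0, 0, 0, 0, 0, 0, 0, 0, 0, 0, 0, 0, 0, 0, 1, 1, 1, 1, 1, 1, 1, 1, 1, 1, 3, 1, 1, 3, 3]]"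
lemma check_gen_matrix_12: "check gen_matrix_12 [0, 1, 6, 14] 16" by code_simp

definition gen_matrix_13 :: "nat list list" where "gen_matrix_13 = [[1, 0, 0, 0, 0, 0, 0, 0, 1, 0, 0, 1, 1, 1, 1, 1, 1, 1, 1, 0, 0, 1, 1, 1, 1, 1, 0, 0, 1, 0, 1, 0, 0, 1, 1, 0, 0, 1, 0, 2], [0, 1, 0, 0, 0, 0, 0, 0, 1, 0, 1, 0, 1, 1, 1, 0, 1, 0, 0, 1, 0, 0, 1, 1, 0, 1, 0, 1, 1, 1, 0, 1, 0, 1, 1, 1, 0, 1, 1, 2], [0, 0, 1, 0, 0, 0, 0, 0, 1, 1, 0, 1, 0, 1, 0, 1, 1, 1, 0, 1, 1, 0, 1, 0, 1, 1, 1, 0, 0, 1, 0, 0, 1, 1, 0, 1, 2, 0, 1, 1], [0, 0, 0, 1, 0, 0, 0, 0, 1, 1, 1, 1, 1, 0, 0, 0, 1, 1, 0, 1, 1, 1, 1, 1, 1, 0, 0, 0, 1, 1, 1, 1, 0, 1, 0, 0, 2, 0, 1, 0], [0, 0, 0, 0, 1, 0, 0, 0, 0, 0, 0, 1, 1, 1, 0, 0, 0, 1, 0, 0, 1, 0, 0, 1, 1, 1, 1, 0, 0, 0, 1, 1, 0, 1, 1, 0, 0, 0, 3, 1], [0, 0, 0, 0, 0, 1, 0, 0, 1, 1, 1, 1, 1, 1, 0, 0, 0, 0, 1, 1, 1, 0, 0, 0, 0, 0, 0, 1, 1, 1, 1, 3, 0, 0, 2, 3, 1, 1, 1, 3], [0,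 0, 0, 0, 0, 0, 1, 0, 0, 0, 0, 0, 0, 0, 1, 1, 1, 1, 1, 1, 1, 0, 0, 0, 0, 0, 0, 0, 0, 0, 0, 0, 1, 1, 1, 1, 1, 3, 1, 1], [0, 0, 0, 0, 0, 0, 0, 1, 0, 0, 0, 0, 0, 0, 0, 0, 0, 0, 0, 0, 2, 1, 1, 1, 1, 1, 1, 1, 1, 1, 1, 1, 1, 1, 1, 1, 3, 1, 3, 1]]"
lemma check_gen_matrix_13: "check gen_matrix_13 [0, 1, 6, 14] 17" by code_simp

definition gen_matrix_14 :: "nat list list" where "gen_matrix_14 = [[1, 0, 0, 0, 0, 0, 0, 0, 0, 0, 1, 1, 0, 1, 0, 0, 1, 1, 1, 1, 0, 1, 1, 1, 1, 0, 1, 0, 1, 1, 1, 0, 0, 0, 1, 1, 0, 1, 1, 2], [0, 1, 0, 0, 0, 0, 0, 0, 1, 1, 1, 0, 1, 0, 0, 1, 1, 0, 0, 0, 1, 1, 0, 0, 1, 0, 1, 0, 0, 1, 1, 1, 1, 0, 1, 1, 1, 2, 3, 1], [0, 0, 1, 0, 0, 0, 0, 0, 1, 1, 0, 0, 1, 0, 1, 0, 1, 1, 1, 0, 0, 0, 0, 0, 1, 1, 0, 0, 1, 0, 0, 1, 0, 1, 0, 0, 1, 1, 0, 3], [0, 0, 0, 1, 0, 0, 0, 0, 1, 0, 0, 1, 0, 1, 1, 1, 1, 0, 1, 0, 0, 0, 1, 0, 0, 0, 1, 1, 1, 1, 1, 1, 0, 0, 1, 0, 0, 0, 2, 2], [0,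 0, 0, 0, 1, 0, 0, 0, 0, 1, 0, 1, 0, 1, 1, 0, 0, 1, 0, 0, 0, 1, 0, 1, 1, 1, 0, 0, 0, 1, 1, 1, 0, 0, 2, 1, 3, 1, 0, 2], [0, 0, 0, 0, 0, 1, 0, 0, 0, 0, 1, 0, 0, 1, 1, 0, 0, 1, 1, 1, 1, 1, 0, 0, 0, 0, 1, 1, 1, 2, 1, 1, 0, 2, 2, 0, 0, 2, 3, 1], [0, 0, 0, 0, 0, 0, 1, 0, 0, 0, 0, 0, 1, 1, 1, 1, 1, 1, 1, 1, 1, 0, 0, 0, 0, 0, 0, 0, 0, 2, 1, 1, 1, 1, 3, 1, 3, 3, 3, 1], [0, 0, 0, 0, 0, 0, 0, 1, 0, 0, 0, 0, 0, 0, 0, 0, 0, 0, 0, 0, 2, 1, 1, 1, 1, 1, 1, 1, 1, 1, 1, 1, 1, 3, 1, 1, 3, 3, 1, 1]]"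
lemma check_gen_matrix_14: "check gen_matrix_14 [0, 1, 5, 10] 18" by code_simp

definition gen_matrix_15 :: "nat list list" where "gen_matrix_15 = [[1, 0, 0, 0, 0, 0, 0, 0, 0, 1, 0, 0, 1, 1, 0, 1, 1, 0, 1, 1, 1, 0, 1, 0, 0, 0, 0, 0, 0, 1, 0, 1, 0, 1, 1, 0, 0, 1, 0, 1], [0, 1, 0, 0, 0, 0, 0, 0, 1, 0, 0, 1, 0, 0, 1, 1, 1, 1, 0, 1, 0, 1, 0, 1, 0, 0, 0, 1, 0, 1, 1, 1, 0, 1, 2, 1, 1, 1, 1, 3], [0, 0, 1, 0, 0, 0, 0, 0, 1, 1, 1, 0, 1, 0, 0, 1, 0, 1, 1, 1, 1, 0, 0, 1, 1, 1, 0, 0, 1, 1, 1, 0, 1, 1, 0, 2, 1, 0, 1, 0], [0, 0, 0, 1, 0, 0, 0, 0, 0, 0, 1, 1, 1, 0, 0, 0, 0, 0, 0, 1, 1, 0, 0, 1, 1, 1, 1, 0, 0, 0, 1, 1, 1, 1, 0, 1, 0, 0, 0, 3], [0, 0, 0, 0, 1, 0, 0, 0, 0, 0, 0, 0, 1, 1, 1, 1, 0, 0, 0, 0, 1, 1, 0, 0, 1, 0, 1, 1, 1, 0, 0, 0, 1, 1, 0, 3, 1, 2, 2, 1], [0, 0, 0, 0, 0, 1, 0, 0, 1, 1, 1, 1, 1, 1, 1, 1, 0, 0, 0, 0, 0, 0, 1, 1, 1, 0, 0, 0, 0, 1, 1, 1, 1, 3, 0, 2, 0, 1, 3, 1], [0,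 0, 0, 0, 0, 0, 1, 0, 0, 0, 0, 0, 0, 0, 0, 0, 1, 1, 1, 1, 1, 1, 1, 1, 1, 0, 0, 0, 0, 0, 0, 0, 0, 0, 1, 1, 1, 1, 3, 1], [0, 0, 0, 0, 0, 0, 0, 1, 0, 0, 0, 0, 0, 0, 0, 0, 0, 0, 0, 0, 0, 0, 0, 0, 0, 1, 1, 1, 1, 1, 1, 1, 1, 1, 3, 1, 1, 3, 3, 3]]"
lemma check_gen_matrix_15: "check gen_matrix_15 [0, 1, 6, 16] 19" by code_simp

definition gen_matrix_16 :: "nat list list" where "gen_matrix_16 = [[1, 0, 0, 0, 0, 0, 0, 0, 0, 0, 0, 0, 0, 1, 1, 0, 1, 1, 0, 1, 0, 1, 0, 0, 1, 1, 1, 0, 1, 1, 0, 0, 1, 0, 1, 0, 0, 1, 0, 1], [0, 1, 0, 0, 0, 0, 0, 0, 1, 0, 1, 1, 1, 0, 1, 1, 0, 1, 0, 0, 1, 1, 1, 0, 1, 0, 1, 0, 0, 1, 0, 1, 1, 1, 0, 1, 1, 1, 2, 0], [0, 0, 1, 0, 0, 0, 0, 0, 1, 0, 1, 0, 0, 0, 0, 1, 1, 0, 0, 1, 0, 1, 0, 1, 0, 0, 1, 1, 0, 1, 1, 1, 1, 0, 0, 1, 1, 2, 2, 0], [0, 0, 0, 1, 0, 0, 0, 0, 0, 1, 1, 1, 0, 0, 0, 0, 0, 1, 1, 1, 1, 1, 0, 0, 1, 1, 0, 0, 0, 1, 1, 1, 0, 0, 1, 0, 2, 2, 0, 3], [0,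 0, 0, 0, 1, 0, 0, 0, 1, 1, 1, 0, 1, 1, 0, 0, 0, 1, 1, 1, 0, 0, 1, 0, 0, 0, 1, 1, 0, 1, 1, 0, 0, 2, 1, 1, 0, 2, 0, 0], [0, 0, 0, 0, 0, 1, 0, 0, 0, 1, 1, 1, 1, 1, 0, 0, 0, 0, 0, 0, 0, 0, 0, 1, 1, 0, 0, 0, 1, 1, 1, 1, 0, 0, 0, 0, 3, 1, 1, 3], [0, 0, 0, 0, 0, 0, 1, 0, 0, 0, 0, 0, 0, 0, 1, 1, 1, 1, 1, 1, 1, 1, 1, 1, 1, 0, 0, 0, 0, 0, 0, 2, 1, 1, 1, 3, 1, 3, 3, 1], [0, 0, 0, 0, 0, 0, 0, 1, 0, 0, 0, 0, 0, 0, 0, 0, 0, 0, 0, 0, 0, 0, 0, 0, 0, 1, 1, 1, 1, 1, 1, 1, 1, 3, 1, 3, 3, 1, 3, 1]]"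
lemma check_gen_matrix_16: "check gen_matrix_16 [0, 1, 6, 14] 20" by code_simp

definition gen_matrix_17 :: "nat list list" where "gen_matrix_17 = [[1, 0, 0, 0, 0, 0, 0, 0, 1, 1, 1, 0, 0, 1, 0, 0, 0, 1, 1, 1, 0, 1, 0, 1, 0, 1, 1, 0, 1, 1, 1, 0, 1, 0, 0, 1, 1, 1, 2, 1], [0, 1, 0, 0, 0, 0, 0, 0, 1, 1, 1, 1, 0, 1, 1, 0, 1, 0, 0, 1, 1, 0, 0, 1, 0, 1, 1, 1, 1, 0, 0, 1, 1, 1, 0, 1, 0, 1, 2, 0], [0, 0, 1, 0, 0, 0, 0, 0, 1, 0, 0, 0, 1, 1, 1, 0, 0, 0, 0, 0, 1, 1, 0, 1, 1, 1, 1, 0, 1, 0, 1, 1, 1, 0, 0, 0, 1, 2, 2, 0], [0, 0, 0, 1, 0, 0, 0, 0, 0, 1, 0, 1, 1, 1, 0, 0, 1, 0, 0, 1, 1, 0, 0, 1, 1, 1, 0, 0, 0, 0, 1, 1, 0, 0, 1, 1, 0, 2, 2, 3], [0, 0, 0, 0, 1, 0, 0, 0, 0, 0, 0, 0, 1, 1, 0, 1, 1, 1, 0, 0, 0, 1, 1, 1, 0, 0, 1, 1, 0, 0, 0, 0, 0, 1, 1, 1, 1, 1, 0, 0], [0, 0, 0, 0, 0, 1, 0, 0, 0, 0, 1, 1, 0, 0, 0, 1, 1, 0, 1, 1, 1, 1, 1, 1, 0, 0, 0, 0, 1, 1, 1, 1, 0, 1, 1, 3, 0, 2, 1, 1], [0,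 0, 0, 0, 0, 0, 1, 0, 0, 0, 0, 0, 0, 0, 1, 1, 1, 1, 1, 1, 1, 0, 0, 0, 0, 0, 0, 0, 0, 0, 0, 0, 1, 1, 3, 3, 1, 1, 3, 1], [0, 0, 0, 0, 0, 0, 0, 1, 0, 0, 0, 0, 0, 0, 0, 0, 0, 0, 0, 0, 2, 1, 1, 1, 1, 1, 1, 1, 1, 1, 1, 1, 1, 1, 1, 1, 1, 3, 3, 1]]"
lemma check_gen_matrix_17: "check gen_matrix_17 [0, 1, 2, 8] 21" by code_simp

definition gen_matrix_18 :: "nat list list" where "gen_matrix_18 = [[1, 0, 0, 0, 0, 0, 0, 0, 1, 1, 0, 1, 1, 0, 1, 1, 1, 1, 0, 1, 1, 1, 0, 1, 1, 1, 0, 1, 1, 1, 0, 1, 1, 1, 1, 0, 1, 0, 1, 0], [0, 1, 0, 0, 0, 0, 0, 0, 1, 0, 1, 1, 0, 0, 1, 0, 1, 0, 1, 0, 1, 0, 0, 1, 1, 1, 1, 0, 1, 0, 1, 0, 1, 1, 0, 1, 3, 1, 2, 1], [0, 0, 1, 0, 0, 0, 0, 0, 0, 0, 0, 1, 1, 1, 1, 0, 0, 1, 1, 1, 1, 0, 1, 0, 0, 1, 1, 1, 0, 1, 1, 1, 1, 0, 0, 1, 0, 2, 1, 3], [0, 0, 0, 1, 0, 0, 0, 0, 0, 1, 1, 1, 0, 1, 1, 0, 1, 1, 0, 0, 1, 0, 0, 1, 0, 1, 1, 1, 1, 1, 1, 0, 0, 1, 1, 0, 0, 2, 3, 1], [0,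 0, 0, 0, 1, 0, 0, 0, 1, 1, 1, 1, 0, 0, 0, 1, 1, 1, 0, 0, 0, 1, 1, 1, 1, 0, 1, 1, 1, 0, 0, 1, 0, 0, 1, 0, 2, 3, 1, 1], [0, 0, 0, 0, 0, 1, 0, 0, 0, 0, 0, 0, 1, 1, 1, 1, 1, 1, 0, 0, 0, 0, 0, 0, 1, 0, 0, 0, 0, 1, 1, 1, 0, 0, 0, 3, 1, 1, 3, 3], [0, 0, 0, 0, 0, 0, 1, 0, 0, 0, 0, 0, 0, 0, 0, 0, 0, 0, 1, 1, 1, 1, 1, 1, 1, 0, 0, 0, 0, 0, 0, 0, 1, 1, 3, 1, 3, 3, 3, 3], [0, 0, 0, 0, 0, 0, 0, 1, 0, 0, 0, 0, 0, 0, 0, 0, 0, 0, 0, 0, 0, 0, 0, 0, 0, 1, 1, 1, 1, 1, 1, 1, 1, 1, 1, 1, 3, 3, 1, 3]]"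
lemma check_gen_matrix_18: "check gen_matrix_18 [0, 1, 4, 8] 22" by code_simp

definition gen_matrix_19 :: "nat list list" where "gen_matrix_19 = [[1, 0, 0, 0, 0, 0, 0, 0, 0, 1, 0, 1, 0, 0, 0, 0, 1, 1, 0, 0, 0, 1, 0, 1, 1, 0, 1, 0, 1, 1, 0, 1, 0, 1, 1, 0, 1, 1, 0, 0], [0, 1, 0, 0, 0, 0, 0, 0, 1, 1, 1, 0, 1, 0, 1, 0, 1, 0, 0, 1, 0, 0, 0, 0, 0, 1, 0, 0, 1, 1, 0, 0, 1, 0, 1, 0, 3, 0, 1, 1], [0, 0, 1, 0, 0, 0, 0, 0, 1, 1, 0, 1, 0, 1, 1, 0, 0, 0, 1, 0, 0, 0, 0, 1, 0, 0, 1, 0, 1, 0, 0, 1, 1, 0, 1, 0, 0, 1, 1, 1], [0, 0, 0, 1, 0, 0, 0, 0, 1, 1, 1, 0, 1, 1, 1, 1, 0, 1, 0, 0, 1, 0, 1, 0, 1, 1, 1, 1, 0, 1, 1, 0, 0, 1, 0, 1, 0, 2, 0, 1], [0, 0, 0, 0, 1, 0, 0, 0, 0, 1, 1, 0, 0, 0, 1, 1, 0, 0, 1, 1, 1, 0, 0, 1, 1, 0, 1, 1, 0, 0, 0, 1, 1, 1, 0, 0, 2, 0, 2, 3], [0, 0, 0, 0, 0, 1, 0, 0, 0, 0, 0, 1, 1, 1, 1, 1, 0, 0, 0, 0, 0, 1, 1, 1, 1, 0, 0, 0, 1, 1, 1, 1, 1, 3, 0, 2, 1, 1, 3, 1], [0,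 0, 0, 0, 0, 0, 1, 0, 0, 0, 0, 0, 0, 0, 0, 0, 1, 1, 1, 1, 1, 1, 1, 1, 1, 0, 0, 0, 0, 0, 0, 0, 0, 0, 3, 1, 1, 3, 3, 1], [0, 0, 0, 0, 0, 0, 0, 1, 0, 0, 0, 0, 0, 0, 0, 0, 0, 0, 0, 0, 0, 0, 0, 0, 0, 1, 1, 1, 1, 1, 1, 1, 1, 1, 3, 3, 3, 1, 3, 1]]"
lemma check_gen_matrix_19: "check gen_matrix_19 [0, 1, 6, 16] 23" by code_simp

definition gen_matrix_20 :: "nat list list" where "gen_matrix_20 = [[1, 0, 0, 0, 0, 0, 0, 0, 1, 0, 1, 1, 0, 1, 1, 1, 0, 0, 1, 0, 0, 0, 0, 0, 0, 1, 1, 1, 0, 0, 0, 0, 0, 1, 1, 1, 0, 1, 1, 0], [0, 1, 0, 0, 0, 0, 0, 0, 0, 1, 0, 0, 1, 0, 1, 1, 1, 0, 0, 0, 0, 0, 0, 1, 1, 1, 0, 0, 0, 1, 0, 1, 1, 1, 0, 1, 0, 3, 0, 1], [0, 0, 1, 0, 0, 0, 0, 0, 0, 1, 1, 1, 0, 0, 0, 1, 0, 1, 1, 0, 1, 1, 0, 1, 1, 1, 0, 0, 1, 0, 0, 1, 1, 0, 2, 1, 1, 1, 3, 1], [0, 0, 0, 1, 0, 0, 0, 0, 1, 0, 0, 1, 0, 0, 0, 1, 1, 0, 1, 1, 1, 1, 1, 1, 1, 0, 0, 1, 0, 0, 1, 1, 0, 0, 1, 1, 3, 3, 2, 1], [0,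 0, 0, 0, 1, 0, 0, 0, 1, 0, 0, 1, 1, 1, 0, 0, 0, 1, 1, 0, 1, 0, 1, 1, 0, 0, 0, 1, 0, 0, 0, 0, 1, 1, 1, 1, 0, 0, 0, 3], [0, 0, 0, 0, 0, 1, 0, 0, 0, 1, 1, 1, 1, 1, 0, 0, 0, 0, 0, 1, 1, 0, 0, 0, 1, 1, 1, 3, 0, 0, 0, 0, 0, 0, 0, 0, 1, 3, 1, 3], [0, 0, 0, 0, 0, 0, 1, 0, 0, 0, 0, 0, 0, 0, 1, 1, 1, 1, 1, 1, 1, 0, 0, 0, 0, 0, 0, 2, 1, 1, 1, 1, 1, 1, 3, 1, 3, 3, 3, 3], [0, 0, 0, 0, 0, 0, 0, 1, 0, 0, 0, 0, 0, 0, 0, 0, 0, 0, 0, 0, 2, 1, 1, 1, 1, 1, 1, 1, 1, 1, 1, 1, 1, 1, 1, 3, 1, 1, 3, 3]]"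
lemma check_gen_matrix_20: "check gen_matrix_20 [0, 1, 6, 14] 24" by code_simp

definition gen_matrix_21 :: "nat list list" where "gen_matrix_21 = [[1, 0, 0, 0, 0, 0, 0, 0, 1, 0, 1, 1, 1, 0, 0, 1, 1, 0, 0, 0, 0, 0, 0, 1, 0, 1, 1, 0, 0, 1, 0, 1, 1, 1, 0, 0, 1, 1, 0, 0], [0, 1, 0, 0, 0, 0, 0, 0, 1, 1, 1, 0, 1, 0, 1, 0, 1, 1, 0, 1, 1, 1, 1, 1, 1, 0, 1, 1, 0, 1, 1, 0, 1, 1, 1, 1, 1, 2, 1, 2], [0, 0, 1, 0, 0, 0, 0, 0, 1, 1, 0, 1, 0, 1, 0, 0, 0, 1, 0, 1, 0, 0, 0, 0, 1, 1, 1, 0, 1, 1, 0, 0, 1, 0, 0, 0, 1, 1, 1, 0], [0, 0, 0, 1, 0, 0, 0, 0, 0, 1, 0, 0, 0, 0, 1, 1, 0, 0, 1, 1, 1, 0, 1, 0, 0, 0, 0, 1, 1, 0, 1, 1, 1, 1, 1, 0, 0, 0, 0, 1], [0, 0, 0, 0, 1, 0, 0, 0, 0, 0, 1, 1, 0, 1, 0, 0, 0, 0, 1, 1, 0, 1, 1, 1, 1, 0, 1, 0, 0, 0, 1, 1, 1, 0, 1, 2, 2, 0, 0, 1], [0, 0, 0, 0, 0, 1, 0, 0, 0, 0, 0, 0, 1, 1, 1, 1, 0, 0, 0, 0, 0, 0, 1, 1, 1, 0, 0, 0, 0, 1, 1, 1, 1, 1, 0, 0, 0, 1, 3, 1], [0,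 0, 0, 0, 0, 0, 1, 0, 0, 0, 0, 0, 0, 0, 0, 0, 1, 1, 1, 1, 1, 1, 1, 1, 1, 0, 0, 0, 0, 0, 0, 0, 2, 2, 1, 3, 3, 3, 1, 3], [0, 0, 0, 0, 0, 0, 0, 1, 0, 0, 0, 0, 0, 0, 0, 0, 0, 0, 0, 0, 0, 0, 0, 0, 0, 1, 1, 1, 1, 1, 1, 1, 1, 3, 1, 1, 3, 1, 3, 3]]"
lemma check_gen_matrix_21: "check gen_matrix_21 [0, 1, 2, 8] 25" by code_simp

definition gen_matrix_22 :: "nat list list" where "gen_matrix_22 = [[1, 0, 0, 0, 0, 0, 0, 0, 1, 1, 1, 1, 1, 0, 1, 0, 1, 0, 1, 1, 1, 1, 1, 1, 0, 0, 0, 0, 0, 0, 0, 1, 1, 1, 0, 1, 1, 0, 1, 2], [0, 1, 0, 0, 0, 0, 0, 0, 1, 1, 0, 1, 1, 0, 0, 1, 1, 1, 1, 0, 0, 1, 0, 1, 1, 0, 1, 0, 1, 1, 0, 1, 0, 0, 0, 1, 1, 2, 3, 1], [0, 0, 1, 0, 0, 0, 0, 0, 1, 0, 1, 0, 0, 1, 0, 0, 0, 1, 0, 1, 0, 1, 0, 0, 1, 0, 0, 1, 0, 0, 1, 1, 0, 1, 1, 1, 1, 2, 2, 3], [0, 0, 0, 1, 0, 0, 0, 0, 0, 1, 1, 0, 0, 0, 1, 1, 0, 0, 1, 1, 1, 1, 1, 0, 0, 1, 1, 0, 0, 1, 0, 0, 0, 0, 0, 2, 1, 1, 1, 2], [0,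 0, 0, 0, 1, 0, 0, 0, 0, 0, 0, 1, 0, 1, 0, 0, 0, 0, 1, 1, 0, 0, 1, 1, 1, 1, 0, 1, 1, 1, 0, 0, 0, 1, 0, 0, 3, 1, 3, 0], [0, 0, 0, 0, 0, 1, 0, 0, 0, 0, 0, 0, 1, 1, 1, 1, 0, 0, 0, 0, 0, 0, 1, 1, 1, 0, 0, 0, 0, 1, 1, 1, 3, 3, 0, 0, 0, 3, 3, 3], [0, 0, 0, 0, 0, 0, 1, 0, 0, 0, 0, 0, 0, 0, 0, 0, 1, 1, 1, 1, 1, 1, 1, 1, 1, 0, 0, 0, 0, 0, 0, 0, 0, 0, 1, 3, 3, 3, 1, 3], [0, 0, 0, 0, 0, 0, 0, 1, 0, 0, 0, 0, 0, 0, 0, 0, 0, 0, 0, 0, 0, 0, 0, 0, 0, 1, 1, 1, 1, 1, 1, 1, 1, 3, 1, 3, 1, 3, 1, 3]]"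
lemma check_gen_matrix_22: "check gen_matrix_22 [0, 1, 2, 8] 26" by code_simp

definition gen_matrix_23 :: "nat list list" where "gen_matrix_23 = [[1, 0, 0, 0, 0, 0, 0, 0, 1, 1, 1, 0, 0, 1, 1, 1, 0, 1, 0, 0, 0, 1, 0, 1, 0, 1, 0, 1, 1, 1, 0, 0, 0, 1, 0, 0, 0, 0, 0, 1], [0, 1, 0, 0, 0, 0, 0, 0, 1, 1, 0, 1, 1, 0, 0, 1, 0, 0, 0, 1, 1, 0, 0, 0, 0, 1, 0, 1, 1, 1, 1, 0, 1, 0, 0, 0, 0, 1, 0, 1], [0, 0, 1, 0, 0, 0, 0, 0, 1, 0, 0, 1, 1, 1, 0, 1, 1, 0, 0, 0, 1, 1, 0, 0, 1, 0, 1, 1, 1, 0, 1, 0, 0, 0, 1, 0, 1, 2, 0, 2], [0, 0, 0, 1, 0, 0, 0, 0, 0, 0, 1, 0, 0, 0, 1, 1, 1, 0, 1, 1, 0, 0, 1, 0, 0, 1, 1, 1, 0, 1, 1, 1, 0, 0, 1, 0, 2, 0, 1, 2], [0, 0, 0, 0, 1, 0, 0, 0, 0, 1, 1, 0, 0, 0, 0, 0, 0, 1, 1, 1, 1, 1, 0, 0, 0, 1, 1, 1, 0, 0, 0, 0, 2, 0, 1, 1, 1, 3, 3, 2], [0, 0, 0, 0, 0, 1, 0, 0, 0, 0, 0, 1, 0, 0, 0, 0, 0, 0, 0, 1, 1, 1, 1, 1, 1, 0, 1, 1, 1, 3, 0, 0, 0, 0, 0, 0, 1, 3, 1, 1], [0,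 0, 0, 0, 0, 0, 1, 0, 0, 0, 0, 0, 1, 1, 1, 1, 1, 1, 1, 1, 1, 1, 1, 1, 1, 0, 0, 0, 0, 0, 1, 1, 1, 1, 1, 3, 3, 1, 3, 1], [0, 0, 0, 0, 0, 0, 0, 1, 0, 0, 0, 0, 0, 0, 0, 0, 0, 0, 0, 0, 0, 0, 0, 0, 0, 1, 1, 1, 1, 1, 1, 1, 3, 1, 1, 3, 3, 1, 1, 3]]"
lemma check_gen_matrix_23: "check gen_matrix_23 [0, 1, 2, 8] 27" by code_simp

definition gen_matrix_24 :: "nat list list" where "gen_matrix_24 = [[1, 0, 0, 0, 0, 0, 0, 0, 0, 1, 0, 0, 1, 1, 1, 1, 1, 1, 0, 0, 0, 0, 0, 0, 0, 1, 1, 1, 0, 0, 1, 0, 1, 0, 0, 0, 1, 1, 0, 1], [0, 1, 0, 0, 0, 0, 0, 0, 1, 0, 1, 0, 0, 1, 1, 0, 1, 0, 0, 1, 1, 1, 1, 1, 0, 1, 1, 1, 0, 1, 0, 1, 1, 0, 0, 1, 3, 0, 1, 2], [0, 0, 1, 0, 0, 0, 0, 0, 1, 1, 0, 1, 0, 1, 0, 0, 0, 0, 0, 0, 1, 0, 1, 0, 1, 1, 1, 0, 0, 0, 0, 1, 1, 0, 1, 1, 0, 3, 3, 0], [0, 0, 0, 1, 0, 0, 0, 0, 1, 0, 1, 1, 0, 0, 0, 1, 1, 0, 1, 1, 0, 1, 1, 0, 0, 0, 0, 1, 1, 1, 1, 0, 0, 1, 1, 0, 0, 0, 0, 0], [0,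 0, 0, 0, 1, 0, 0, 0, 0, 0, 0, 0, 1, 1, 0, 0, 1, 0, 0, 1, 1, 0, 1, 1, 1, 1, 0, 0, 0, 1, 1, 1, 0, 0, 3, 1, 2, 0, 2, 1], [0, 0, 0, 0, 0, 1, 0, 0, 0, 1, 1, 1, 1, 1, 0, 0, 0, 1, 1, 1, 1, 0, 0, 0, 0, 0, 1, 1, 1, 1, 1, 3, 0, 0, 0, 2, 1, 3, 3, 1], [0, 0, 0, 0, 0, 0, 1, 0, 0, 0, 0, 0, 0, 0, 1, 1, 1, 1, 1, 1, 1, 0, 0, 0, 0, 0, 0, 0, 0, 0, 0, 0, 1, 1, 3, 3, 1, 1, 3, 1], [0, 0, 0, 0, 0, 0, 0, 1, 0, 0, 0, 0, 0, 0, 0, 0, 0, 0, 0, 0, 2, 1, 1, 1, 1, 1, 1, 1, 1, 1, 1, 1, 1, 1, 1, 1, 3, 1, 1, 3]]"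
lemma check_gen_matrix_24: "check gen_matrix_24 [0, 1, 6, 14] 28" by code_simp

definition gen_matrix_25 :: "nat list list" where "gen_matrix_25 = [[1, 0, 0, 0, 0, 0, 0, 0, 1, 0, 0, 1, 1, 1, 1, 1, 1, 1, 1, 0, 0, 1, 0, 0, 0, 1, 0, 1, 0, 1, 0, 1, 1, 0, 0, 1, 1, 2, 1, 1], [0, 1, 0, 0, 0, 0, 0, 0, 0, 0, 1, 0, 0, 1, 1, 0, 1, 0, 0, 1, 0, 0, 0, 0, 1, 0, 0, 1, 1, 1, 0, 1, 0, 1, 1, 1, 0, 1, 3, 0], [0, 0, 1, 0, 0, 0, 0, 0, 1, 1, 0, 1, 0, 1, 0, 1, 1, 1, 0, 1, 1, 1, 1, 0, 0, 0, 1, 1, 1, 0, 1, 1, 0, 0, 1, 0, 3, 1, 0, 2], [0, 0, 0, 1, 0, 0, 0, 0, 0, 1, 1, 1, 0, 0, 0, 0, 1, 1, 0, 1, 1, 0, 1, 1, 0, 0, 0, 0, 1, 1, 1, 1, 0, 1, 0, 0, 0, 2, 1, 2], [0, 0, 0, 0, 1, 0, 0, 0, 0, 0, 0, 1, 1, 1, 0, 0, 0, 1, 0, 0, 1, 0, 0, 1, 1, 1, 1, 0, 0, 0, 1, 1, 0, 1, 1, 2, 2, 0, 3, 3], [0, 0, 0, 0, 0, 1, 0, 0, 1, 1, 1, 1, 1, 1, 0, 0, 0, 0, 1, 1, 1, 0, 0, 0, 0, 0, 0, 1, 1, 1, 1, 3, 0, 0, 2, 1, 1, 1, 1, 1], [0,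 0, 0, 0, 0, 0, 1, 0, 0, 0, 0, 0, 0, 0, 1, 1, 1, 1, 1, 1, 1, 0, 0, 0, 0, 0, 0, 0, 0, 0, 0, 0, 1, 1, 3, 1, 1, 3, 3, 3], [0, 0, 0, 0, 0, 0, 0, 1, 0, 0, 0, 0, 0, 0, 0, 0, 0, 0, 0, 0, 2, 1, 1, 1, 1, 1, 1, 1, 1, 1, 1, 1, 1, 1, 3, 1, 3, 1, 3, 1]]"
lemma check_gen_matrix_25: "check gen_matrix_25 [0, 1, 6, 14] 29" by code_simp

definition gen_matrix_26 :: "nat list list" where "gen_matrix_26 = [[1, 0, 0, 0, 0, 0, 0, 0, 0, 0, 1, 0, 0, 1, 1, 0, 1, 1, 0, 1, 1, 1, 0, 1, 1, 1, 1, 0, 1, 0, 1, 1, 0, 1, 0, 0, 1, 2, 1, 1], [0, 1, 0, 0, 0, 0, 0, 0, 1, 1, 0, 1, 1, 0, 1, 0, 0, 1, 1, 1, 1, 1, 0, 0, 0, 1, 0, 1, 1, 1, 1, 0, 1, 1, 1, 0, 1, 0, 0, 2], [0, 0, 1, 0, 0, 0, 0, 0, 0, 1, 1, 1, 0, 0, 0, 1, 0, 1, 1, 0, 1, 1, 0, 1, 1, 1, 0, 0, 1, 0, 0, 1, 1, 0, 2, 1, 3, 1, 1, 1], [0, 0, 0, 1, 0, 0, 0, 0, 1, 0, 0, 1, 0, 0, 0, 1, 1, 0, 1, 1, 1, 1, 1, 1, 1, 0, 0, 1, 0, 0, 1, 1, 0, 0, 1, 1, 1, 1, 2, 3], [0,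 0, 0, 0, 1, 0, 0, 0, 1, 0, 0, 1, 1, 1, 0, 0, 0, 1, 1, 0, 1, 0, 1, 1, 0, 0, 0, 1, 0, 0, 0, 0, 1, 1, 1, 3, 0, 2, 2, 1], [0, 0, 0, 0, 0, 1, 0, 0, 0, 1, 1, 1, 1, 1, 0, 0, 0, 0, 0, 1, 1, 0, 0, 0, 1, 1, 1, 1, 0, 0, 0, 0, 0, 0, 0, 0, 3, 1, 1, 3], [0, 0, 0, 0, 0, 0, 1, 0, 0, 0, 0, 0, 0, 0, 1, 1, 1, 1, 1, 1, 1, 0, 0, 0, 0, 0, 0, 2, 1, 1, 1, 1, 1, 1, 1, 1, 1, 3, 3, 1], [0, 0, 0, 0, 0, 0, 0, 1, 0, 0, 0, 0, 0, 0, 0, 0, 0, 0, 0, 0, 2, 1, 1, 1, 1, 1, 1, 1, 1, 1, 1, 1, 1, 1, 3, 1, 1, 3, 3, 3]]"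
lemma check_gen_matrix_26: "check gen_matrix_26 [0, 1, 6, 14] 30" by code_simp

definition gen_matrix_27 :: "nat list list" where "gen_matrix_27 = [[1, 0, 0, 0, 0, 0, 0, 0, 1, 1, 1, 0, 1, 0, 0, 1, 1, 0, 1, 1, 1, 0, 1, 1, 0, 1, 0, 0, 1, 0, 1, 0, 1, 1, 0, 0, 1, 1, 1, 2], [0, 1, 0, 0, 0, 0, 0, 0, 1, 1, 0, 1, 0, 1, 0, 0, 0, 1, 0, 1, 1, 0, 0, 1, 0, 1, 1, 1, 0, 1, 0, 0, 1, 0, 0, 0, 0, 0, 3, 1], [0, 0, 1, 0, 0, 0, 0, 0, 1, 0, 1, 1, 0, 0, 1, 0, 1, 0, 0, 0, 0, 0, 1, 1, 1, 1, 0, 1, 1, 1, 0, 0, 0, 1, 0, 2, 1, 1, 2, 0], [0, 0, 0, 1, 0, 0, 0, 0, 0, 1, 1, 0, 1, 1, 1, 1, 0, 1, 0, 1, 1, 0, 0, 1, 1, 0, 0, 1, 1, 1, 0, 1, 1, 1, 1, 2, 0, 0, 0, 3], [0, 0, 0, 0, 1, 0, 0, 0, 0, 0, 0, 0, 0, 0, 1, 1, 1, 0, 1, 0, 1, 1, 1, 0, 0, 1, 0, 0, 1, 1, 0, 1, 1, 1, 2, 1, 1, 2, 0, 0], [0, 0, 0, 0, 0, 1, 0, 0, 0, 0, 0, 1, 1, 1, 0, 0, 1, 0, 0, 1, 0, 1, 1, 0, 0, 0, 1, 1, 0, 2, 0, 1, 1, 1, 0, 0, 2, 1, 1, 1], [0,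 0, 0, 0, 0, 0, 1, 0, 0, 0, 0, 0, 0, 0, 0, 0, 1, 1, 1, 1, 1, 0, 0, 0, 0, 0, 0, 0, 0, 0, 1, 1, 1, 1, 1, 3, 3, 3, 1, 1], [0, 0, 0, 0, 0, 0, 0, 1, 0, 0, 0, 0, 0, 0, 0, 0, 0, 0, 0, 0, 2, 1, 1, 1, 1, 1, 1, 1, 1, 1, 1, 1, 1, 1, 1, 1, 1, 3, 1, 1]]"
lemma check_gen_matrix_27: "check gen_matrix_27 [0, 1, 2, 8] 31" by code_simp

definition gen_matrix_28 :: "nat list list" where "gen_matrix_28 = [[1, 0, 0, 0, 0, 0, 0, 0, 1, 1, 0, 1, 0, 1, 1, 0, 0, 0, 1, 1, 0, 1, 0, 1, 0, 1, 0, 1, 1, 0, 1, 0, 1, 1, 0, 1, 1, 1, 1, 2], [0, 1, 0, 0, 0, 0, 0, 0, 1, 0, 0, 1, 1, 1, 0, 1, 1, 0, 1, 0, 0, 1, 1, 1, 1, 0, 1, 1, 0, 1, 0, 0, 1, 0, 1, 0, 1, 3, 2, 1], [0, 0, 1, 0, 0, 0, 0, 0, 0, 1, 0, 0, 1, 1, 0, 0, 1, 0, 1, 0, 1, 1, 1, 0, 1, 1, 0, 1, 0, 0, 0, 1, 1, 0, 0, 0, 0, 0, 3, 1], [0, 0, 0, 1, 0, 0, 0, 0, 1, 1, 1, 1, 1, 1, 0, 0, 1, 1, 1, 1, 0, 1, 1, 1, 0, 1, 1, 0, 0, 0, 0, 1, 1, 1, 0, 2, 1, 2, 0, 2], [0,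 0, 0, 0, 1, 0, 0, 0, 0, 0, 1, 1, 1, 0, 1, 1, 1, 1, 0, 0, 0, 1, 0, 0, 1, 1, 0, 1, 1, 0, 0, 1, 1, 1, 0, 0, 2, 2, 0, 0], [0, 0, 0, 0, 0, 1, 0, 0, 0, 0, 1, 1, 1, 1, 1, 1, 0, 0, 0, 0, 1, 1, 1, 1, 1, 0, 0, 0, 0, 1, 1, 1, 1, 1, 0, 0, 2, 1, 3, 3], [0, 0, 0, 0, 0, 0, 1, 0, 0, 0, 0, 0, 0, 0, 0, 0, 1, 1, 1, 1, 1, 1, 1, 1, 1, 0, 0, 0, 0, 0, 0, 0, 0, 0, 1, 3, 3, 1, 3, 1], [0, 0, 0, 0, 0, 0, 0, 1, 0, 0, 0, 0, 0, 0, 0, 0, 0, 0, 0, 0, 0, 0, 0, 0, 0, 1, 1, 1, 1, 1, 1, 1, 1, 3, 1, 3, 3, 1, 3, 3]]"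
lemma check_gen_matrix_28: "check gen_matrix_28 [0, 1, 3, 8] 32" by code_simp

definition gen_matrix_29 :: "nat list list" where "gen_matrix_29 = [[1, 0, 0, 0, 0, 0, 0, 0, 1, 1, 1, 1, 1, 0, 1, 1, 1, 1, 0, 1, 0, 1, 0, 1, 1, 0, 0, 1, 0, 1, 0, 1, 0, 1, 0, 1, 0, 1, 0, 2], [0, 1, 0, 0, 0, 0, 0, 0, 1, 1, 1, 0, 1, 0, 0, 1, 1, 0, 1, 0, 0, 1, 0, 0, 1, 1, 1, 1, 1, 1, 1, 0, 0, 0, 1, 1, 0, 3, 2, 1], [0, 0, 1, 0, 0, 0, 0, 0, 0, 0, 0, 1, 1, 1, 0, 1, 0, 1, 1, 1, 0, 0, 1, 0, 1, 1, 0, 1, 0, 1, 0, 0, 1, 1, 0, 1, 0, 2, 0, 2], [0, 0, 0, 1, 0, 0, 0, 0, 1, 0, 1, 1, 1, 1, 0, 0, 0, 0, 1, 1, 1, 1, 0, 0, 0, 0, 1, 1, 0, 0, 0, 0, 1, 1, 0, 2, 2, 0, 1, 1], [0, 0, 0, 0, 1, 0, 0, 0, 0, 1, 1, 1, 0, 0, 1, 1, 0, 0, 1, 1, 1, 1, 1, 1, 0, 0, 0, 0, 1, 0, 0, 0, 1, 0, 0, 2, 1, 2, 3, 0], [0, 0, 0, 0, 0, 1, 0, 0, 0, 0, 1, 1, 1, 1, 1, 1, 0, 0, 0, 0, 0, 0, 0, 0, 1, 0, 0, 0, 0, 1, 1, 1, 1, 3, 0, 2, 2, 1, 1, 3], [0,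 0, 0, 0, 0, 0, 1, 0, 0, 0, 0, 0, 0, 0, 0, 0, 1, 1, 1, 1, 1, 1, 1, 1, 1, 0, 0, 0, 0, 0, 0, 0, 0, 0, 1, 3, 3, 1, 1, 3], [0, 0, 0, 0, 0, 0, 0, 1, 0, 0, 0, 0, 0, 0, 0, 0, 0, 0, 0, 0, 0, 0, 0, 0, 0, 1, 1, 1, 1, 1, 1, 1, 1, 1, 1, 3, 3, 3, 1, 3]]"
lemma check_gen_matrix_29: "check gen_matrix_29 [0, 1, 3, 8] 33" by code_simp

definition gen_matrix_30 :: "nat list list" where "gen_matrix_30 = [[1, 0, 0, 0, 0, 0, 0, 0, 1, 1, 1, 0, 0, 1, 1, 0, 1, 1, 0, 0, 0, 0, 1, 0, 0, 1, 0, 0, 0, 0, 1, 0, 0, 1, 0, 1, 1, 0, 1, 1], [0, 1, 0, 0, 0, 0, 0, 0, 1, 1, 0, 1, 0, 0, 0, 1, 0, 0, 0, 0, 1, 0, 1, 0, 1, 0, 1, 1, 0, 1, 0, 1, 0, 0, 0, 1, 1, 1, 3, 0], [0, 0, 1, 0, 0, 0, 0, 0, 0, 0, 1, 1, 1, 0, 0, 0, 1, 1, 0, 0, 0, 0, 1, 1, 0, 0, 0, 0, 1, 1, 1, 1, 0, 0, 1, 1, 3, 0, 0, 3], [0, 0, 0, 1, 0, 0, 0, 0, 0, 0, 1, 1, 1, 1, 0, 1, 0, 0, 0, 1, 1, 1, 1, 0, 0, 1, 1, 0, 1, 1, 1, 1, 1, 0, 1, 0, 0, 3, 2, 1], [0,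 0, 0, 0, 1, 0, 0, 0, 1, 0, 1, 1, 0, 0, 1, 0, 0, 1, 1, 0, 1, 1, 0, 1, 1, 0, 1, 0, 1, 0, 0, 0, 0, 0, 1, 0, 3, 2, 2, 3], [0, 0, 0, 0, 0, 1, 0, 0, 0, 1, 1, 1, 1, 1, 1, 1, 0, 1, 1, 1, 1, 0, 0, 0, 0, 0, 1, 1, 1, 1, 0, 0, 0, 0, 0, 2, 1, 3, 1, 3], [0, 0, 0, 0, 0, 0, 1, 0, 0, 0, 0, 0, 0, 0, 0, 0, 1, 1, 1, 1, 1, 0, 0, 0, 0, 0, 0, 0, 0, 0, 1, 1, 1, 1, 1, 3, 3, 1, 1, 1], [0, 0, 0, 0, 0, 0, 0, 1, 0, 0, 0, 0, 0, 0, 0, 0, 0, 0, 0, 0, 2, 1, 1, 1, 1, 1, 1, 1, 1, 1, 1, 1, 1, 1, 1, 1, 1, 1, 3, 3]]"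
lemma check_gen_matrix_30: "check gen_matrix_30 [0, 1, 4, 8] 34" by code_simp

definition gen_matrix_31 :: "nat list list" where "gen_matrix_31 = [[1, 0, 0, 0, 0, 0, 0, 0, 1, 0, 0, 1, 1, 0, 1, 0, 1, 1, 1, 0, 1, 0, 1, 0, 0, 0, 0, 1, 0, 1, 1, 0, 1, 1, 1, 1, 1, 1, 2, 1], [0, 1, 0, 0, 0, 0, 0, 0, 1, 1, 1, 0, 0, 1, 0, 1, 0, 1, 1, 0, 1, 0, 1, 0, 1, 1, 1, 0, 1, 0, 0, 1, 0, 0, 1, 1, 1, 1, 2, 3], [0, 0, 1, 0, 0, 0, 0, 0, 0, 0, 0, 1, 0, 0, 1, 1, 0, 0, 1, 0, 0, 1, 1, 0, 1, 0, 0, 1, 1, 1, 1, 1, 0, 3, 0, 0, 1, 1, 0, 0], [0, 0, 0, 1, 0, 0, 0, 0, 1, 0, 0, 0, 0, 1, 1, 0, 0, 1, 0, 1, 0, 0, 1, 1, 1, 0, 1, 1, 0, 1, 1, 0, 0, 1, 0, 0, 1, 2, 2, 1], [0, 0, 0, 0, 1, 0, 0, 0, 0, 1, 1, 0, 1, 0, 1, 0, 1, 1, 1, 1, 0, 1, 0, 1, 1, 1, 0, 1, 0, 1, 0, 1, 0, 0, 1, 1, 3, 2, 1, 0], [0, 0, 0, 0, 0, 1, 0, 0, 0, 1, 0, 1, 0, 1, 1, 0, 1, 0, 0, 0, 1, 1, 0, 1, 1, 1, 0, 1, 0, 0, 1, 0, 1, 2, 3, 0, 0, 0, 1, 2], [0,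 0, 0, 0, 0, 0, 1, 0, 0, 0, 1, 0, 1, 0, 0, 1, 0, 0, 0, 0, 1, 1, 0, 1, 1, 1, 0, 1, 0, 2, 0, 1, 0, 3, 0, 1, 3, 1, 2, 3], [0, 0, 0, 0, 0, 0, 0, 1, 0, 0, 0, 0, 0, 0, 0, 0, 0, 1, 1, 1, 1, 1, 1, 1, 1, 1, 1, 1, 1, 1, 1, 1, 1, 3, 3, 1, 3, 3, 3, 1]]"
lemma check_gen_matrix_31: "check gen_matrix_31 [0, 1, 3, 8] 35" by code_simp

definition gen_matrix_32 :: "nat list list" where "gen_matrix_32 = [[1, 0, 0, 0, 0, 0, 0, 0, 1, 1, 1, 1, 1, 0, 0, 1, 1, 1, 1, 0, 0, 1, 0, 0, 0, 1, 1, 1, 0, 0, 0, 1, 1, 0, 0, 1, 1, 2, 1, 1], [0, 1, 0, 0, 0, 0, 0, 0, 1, 0, 0, 1, 0, 0, 0, 1, 0, 1, 1, 1, 1, 1, 0, 1, 0, 0, 1, 0, 1, 0, 0, 0, 1, 0, 1, 1, 0, 0, 0, 3], [0, 0, 1, 0, 0, 0, 0, 0, 0, 1, 1, 1, 0, 1, 0, 0, 0, 1, 0, 0, 0, 1, 0, 0, 1, 0, 1, 1, 1, 0, 1, 0, 1, 0, 1, 1, 1, 2, 2, 0], [0, 0, 0, 1, 0, 0, 0, 0, 1, 0, 0, 1, 1, 1, 0, 0, 1, 1, 1, 0, 0, 1, 0, 1, 1, 1, 1, 1, 1, 1, 0, 0, 0, 1, 1, 1, 0, 0, 3, 2], [0,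 0, 0, 0, 1, 0, 0, 0, 0, 1, 0, 1, 1, 1, 1, 1, 0, 0, 0, 1, 0, 1, 1, 0, 0, 0, 0, 0, 0, 0, 1, 1, 0, 1, 0, 0, 3, 1, 1, 0], [0, 0, 0, 0, 0, 1, 0, 0, 0, 0, 0, 1, 1, 1, 1, 1, 0, 0, 1, 0, 1, 1, 1, 0, 0, 0, 0, 1, 1, 1, 0, 0, 0, 1, 0, 1, 2, 2, 0, 3], [0, 0, 0, 0, 0, 0, 1, 0, 0, 0, 1, 1, 1, 1, 1, 1, 1, 1, 1, 1, 1, 0, 0, 0, 0, 0, 0, 0, 0, 2, 0, 0, 1, 1, 3, 1, 3, 1, 3, 3], [0, 0, 0, 0, 0, 0, 0, 1, 0, 0, 0, 0, 0, 0, 0, 0, 0, 0, 0, 0, 2, 1, 1, 1, 1, 1, 1, 1, 1, 1, 1, 3, 1, 1, 1, 1, 3, 3, 1, 1]]"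
lemma check_gen_matrix_32: "check gen_matrix_32 [0, 1, 3, 8] 36" by code_simp

definition gen_matrix_33 :: "nat list list" where "gen_matrix_33 = [[1, 0, 0, 0, 0, 0, 0, 0, 1, 1, 0, 1, 0, 1, 1, 0, 1, 0, 1, 0, 0, 1, 0, 1, 0, 1, 0, 0, 1, 0, 0, 1, 1, 0, 0, 1, 1, 0, 0, 0], [0, 1, 0, 0, 0, 0, 0, 0, 1, 1, 0, 1, 0, 1, 0, 1, 0, 0, 0, 1, 1, 0, 1, 0, 0, 1, 0, 1, 0, 1, 1, 0, 1, 0, 1, 0, 2, 1, 0, 2], [0, 0, 1, 0, 0, 0, 0, 0, 0, 1, 1, 0, 1, 1, 1, 1, 0, 1, 1, 1, 0, 0, 0, 1, 0, 0, 1, 1, 1, 1, 0, 1, 0, 0, 1, 1, 0, 3, 2, 1], [0, 0, 0, 1, 0, 0, 0, 0, 1, 0, 1, 0, 1, 1, 0, 0, 1, 0, 1, 1, 0, 1, 1, 0, 1, 1, 0, 1, 1, 1, 0, 1, 1, 1, 0, 0, 3, 0, 2, 3], [0, 0, 0, 0, 1, 0, 0, 0, 0, 0, 1, 0, 0, 0, 0, 0, 0, 1, 1, 1, 1, 0, 0, 0, 1, 1, 1, 3, 0, 0, 0, 0, 0, 0, 1, 1, 1, 1, 1, 1], [0, 0, 0, 0, 0, 1, 0, 0, 0, 0, 0, 1, 0, 0, 0, 0, 1, 1, 0, 1, 1, 0, 1, 1, 1, 0, 0, 1, 0, 1, 1, 1, 0, 2, 2, 0, 0, 1, 3, 3], [0,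 0, 0, 0, 0, 0, 1, 0, 0, 0, 0, 0, 1, 1, 1, 1, 0, 0, 1, 0, 0, 0, 1, 1, 1, 0, 0, 1, 1, 0, 0, 0, 1, 3, 1, 1, 1, 0, 2, 2], [0, 0, 0, 0, 0, 0, 0, 1, 0, 0, 0, 0, 0, 0, 0, 0, 0, 0, 0, 0, 2, 1, 1, 1, 1, 1, 1, 1, 1, 1, 1, 1, 1, 3, 3, 1, 1, 1, 1, 1]]"
lemma check_gen_matrix_33: "check gen_matrix_33 [0, 1, 2, 9] 37" by code_simp

definition gen_matrix_34 :: "nat list list" where "gen_matrix_34 = [[1, 0, 0, 0, 0, 0, 0, 0, 0, 0, 1, 0, 0, 1, 1, 1, 1, 0, 1, 1, 0, 1, 1, 1, 1, 0, 1, 0, 1, 1, 1, 0, 0, 0, 1, 1, 0, 1, 1, 2], [0, 1, 0, 0, 0, 0, 0, 0, 1, 0, 1, 1, 0, 1, 0, 1, 0, 0, 1, 0, 1, 1, 0, 0, 1, 0, 1, 0, 0, 1, 1, 1, 1, 0, 1, 1, 1, 2, 1, 1], [0, 0, 1, 0, 0, 0, 0, 0, 1, 1, 0, 1, 0, 0, 0, 1, 0, 1, 1, 1, 0, 0, 0, 0, 1, 1, 0, 0, 1, 0, 0, 1, 0, 1, 0, 0, 1, 1, 0, 3], [0, 0, 0, 1, 0, 0, 0, 0, 0, 1, 0, 0, 1, 1, 0, 0, 1, 1, 0, 1, 1, 1, 0, 0, 0, 0, 1, 1, 1, 0, 1, 1, 0, 2, 0, 0, 0, 2, 1, 1], [0,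 0, 0, 0, 1, 0, 0, 0, 1, 1, 0, 0, 1, 1, 1, 1, 0, 0, 1, 1, 1, 1, 1, 0, 0, 0, 0, 0, 0, 1, 0, 0, 0, 2, 1, 0, 2, 0, 1, 1], [0, 0, 0, 0, 0, 1, 0, 0, 0, 0, 1, 1, 1, 1, 1, 1, 0, 0, 0, 0, 1, 0, 0, 1, 1, 1, 1, 1, 1, 1, 0, 0, 0, 2, 0, 1, 1, 1, 3, 1], [0, 0, 0, 0, 0, 0, 1, 0, 0, 0, 0, 0, 0, 0, 0, 0, 1, 1, 1, 1, 1, 0, 0, 0, 0, 0, 0, 0, 0, 0, 1, 1, 1, 1, 3, 1, 3, 1, 1, 1], [0, 0, 0, 0, 0, 0, 0, 1, 0, 0, 0, 0, 0, 0, 0, 0, 0, 0, 0, 0, 2, 1, 1, 1, 1, 1, 1, 1, 1, 1, 1, 1, 1, 1, 3, 1, 1, 1, 1, 3]]"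
lemma check_gen_matrix_34: "check gen_matrix_34 [0, 1, 5, 10] 38" by code_simp

definition gen_matrix_35 :: "nat list list" where "gen_matrix_35 = [[1, 0, 0, 0, 0, 0, 0, 0, 0, 1, 1, 0, 1, 1, 0, 1, 0, 1, 0, 1, 0, 1, 1, 0, 0, 0, 1, 0, 1, 1, 1, 1, 0, 0, 1, 2, 1, 1, 1, 1], [0, 1, 0, 0, 0, 0, 0, 0, 1, 1, 0, 1, 0, 0, 1, 1, 0, 0, 0, 0, 0, 1, 0, 0, 1, 0, 0, 1, 1, 0, 1, 1, 0, 0, 1, 0, 0, 1, 1, 3], [0, 0, 1, 0, 0, 0, 0, 0, 1, 0, 1, 1, 1, 1, 0, 1, 0, 1, 1, 0, 1, 0, 1, 1, 0, 1, 0, 1, 0, 0, 1, 1, 1, 0, 0, 1, 0, 1, 3, 2], [0, 0, 0, 1, 0, 0, 0, 0, 1, 1, 1, 0, 0, 0, 1, 1, 1, 1, 0, 0, 0, 0, 0, 1, 1, 1, 1, 1, 1, 0, 0, 0, 0, 1, 1, 1, 3, 1, 1, 2], [0, 0, 0, 0, 1, 0, 0, 0, 0, 0, 0, 0, 0, 1, 1, 0, 0, 1, 1, 1, 0, 1, 1, 1, 0, 0, 0, 0, 1, 1, 0, 1, 1, 1, 2, 0, 2, 0, 1, 3], [0, 0, 0, 0, 0, 1, 0, 0, 0, 0, 0, 1, 0, 1, 1, 0, 1, 0, 0, 0, 1, 1, 1, 1, 0, 0, 0, 1, 0, 0, 0, 1, 1, 1, 2, 1, 3, 3, 0, 2], [0,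 0, 0, 0, 0, 0, 1, 0, 0, 0, 0, 0, 1, 1, 1, 1, 1, 1, 1, 1, 1, 0, 0, 0, 0, 0, 0, 0, 0, 2, 1, 1, 1, 1, 1, 1, 3, 1, 1, 3], [0, 0, 0, 0, 0, 0, 0, 1, 0, 0, 0, 0, 0, 0, 0, 0, 0, 0, 0, 0, 2, 1, 1, 1, 1, 1, 1, 1, 1, 1, 1, 1, 1, 1, 3, 1, 3, 3, 3, 3]]"
lemma check_gen_matrix_35: "check gen_matrix_35 [0, 1, 3, 9] 39" by code_simp

definition gen_matrix_36 :: "nat list list" where "gen_matrix_36 = [[1, 0, 0, 0, 0, 0, 0, 0, 0, 0, 1, 0, 1, 0, 1, 1, 0, 1, 0, 1, 1, 0, 1, 1, 0, 0, 1, 1, 0, 0, 0, 1, 1, 0, 0, 1, 0, 0, 1, 0], [0, 1, 0, 0, 0, 0, 0, 0, 0, 1, 1, 1, 0, 0, 1, 0, 1, 0, 0, 1, 1, 0, 1, 0, 1, 1, 0, 1, 0, 1, 1, 0, 1, 1, 0, 2, 1, 1, 3, 1], [0, 0, 1, 0, 0, 0, 0, 0, 0, 1, 1, 0, 0, 1, 0, 1, 1, 1, 0, 1, 1, 1, 1, 0, 1, 0, 0, 1, 1, 0, 1, 1, 1, 0, 0, 1, 1, 1, 2, 0], [0, 0, 0, 1, 0, 0, 0, 0, 1, 1, 1, 0, 0, 0, 0, 0, 1, 1, 1, 1, 0, 0, 0, 0, 0, 1, 0, 0, 1, 1, 1, 0, 0, 1, 1, 0, 2, 1, 1, 2], [0,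 0, 0, 0, 1, 0, 0, 0, 1, 1, 0, 1, 1, 1, 0, 0, 1, 1, 1, 0, 1, 1, 0, 0, 1, 0, 1, 0, 1, 1, 0, 1, 0, 1, 0, 0, 2, 3, 3, 3], [0, 0, 0, 0, 0, 1, 0, 0, 1, 1, 1, 1, 1, 1, 0, 0, 0, 0, 0, 0, 0, 0, 1, 1, 1, 0, 0, 1, 1, 1, 1, 1, 0, 0, 2, 1, 1, 3, 1, 3], [0, 0, 0, 0, 0, 0, 1, 0, 0, 0, 0, 0, 0, 0, 1, 1, 1, 1, 1, 1, 1, 1, 1, 1, 1, 0, 0, 0, 0, 0, 0, 2, 1, 1, 1, 1, 1, 1, 1, 1], [0, 0, 0, 0, 0, 0, 0, 1, 0, 0, 0, 0, 0, 0, 0, 0, 0, 0, 0, 0, 0, 0, 0, 0, 0, 1, 1, 1, 1, 1, 1, 1, 1, 1, 3, 3, 3, 3, 1, 3]]"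
lemma check_gen_matrix_36: "check gen_matrix_36 [0, 1, 6, 14] 41" by code_simp

definition codes :: "(nat list list \<times> nat list \<times> nat) list" where
  "codes = [(gen_matrix_0, [0, 1, 5, 9], 0), (gen_matrix_1, [0, 1, 13, 15], 5), (gen_matrix_2, [0, 1, 6, 11], 6), (gen_matrix_3, [0, 1, 13, 14], 7), (gen_matrix_4, [0, 1, 3, 8], 8), (gen_matrix_5, [0, 1, 4, 11], 9), (gen_matrix_6, [0, 1, 3, 9], 10), (gen_matrix_7, [0, 1, 6, 13], 11), (gen_matrix_8, [0, 1, 5, 8], 12), (gen_matrix_9, [0, 1, 2, 8], 13), (gen_matrix_10, [0, 1, 5, 10], 14), (gen_matrix_11, [0, 1, 7, 17], 15), (gen_matrix_12, [0, 1, 6, 14], 16), (gen_matrix_13, [0, 1, 6, 14], 17), (gen_matrix_14, [0, 1, 5, 10], 18), (gen_matrix_15, [0, 1, 6, 16], 19), (gen_matrix_16, [0, 1, 6, 14], 20), (gen_matrix_17, [0, 1, 2, 8], 21), (gen_matrix_18, [0, 1, 4, 8], 22), (gen_matrix_19, [0, 1, 6, 16], 23), (gen_matrix_20, [0, 1, 6, 14], 24), (gen_matrix_21, [0, 1, 2, 8], 25), (gen_matrix_22, [0, 1, 2, 8], 26), (gen_matrix_23, [0, 1, 2, 8], 27), (gen_matrix_24, [0, 1, 6, 14], 28), (gen_matrix_25, [0, 1, 6, 14], 29), (gen_matrix_26, [0, 1, 6, 14], 30), (gen_matrix_27, [0, 1, 2, 8], 31), (gen_matrix_28, [0, 1, 3,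 8], 32), (gen_matrix_29, [0, 1, 3, 8], 33), (gen_matrix_30, [0, 1, 4, 8], 34), (gen_matrix_31, [0, 1, 3, 8], 35), (gen_matrix_32, [0, 1, 3, 8], 36), (gen_matrix_33, [0, 1, 2, 9], 37), (gen_matrix_34, [0, 1, 5, 10], 38), (gen_matrix_35, [0, 1, 3, 9], 39), (gen_matrix_36, [0, 1, 6, 14], 41)]"

lemma codes_checked: "list_all (\<lambda>(G, Z, v). check G Z v) codes"
  by (simp only: codes_def list.pred_inject prod.case simp_thms
      check_gen_matrix_0 check_gen_matrix_1 check_gen_matrix_2 check_gen_matrix_3 check_gen_matrix_4 check_gen_matrix_5 check_gen_matrix_6 check_gen_matrix_7 check_gen_matrix_8 check_gen_matrix_9 check_gen_matrix_10 check_gen_matrix_11 check_gen_matrix_12 check_gen_matrix_13 check_gen_matrix_14 check_gen_matrix_15 check_gen_matrix_16 check_gen_matrix_17 check_gen_matrix_18 check_gen_matrix_19 check_gen_matrix_20 check_gen_matrix_21 check_gen_matrix_22 check_gen_matrix_23 check_gen_matrix_24 check_gen_matrix_25 check_gen_matrix_26 check_gen_matrix_27 check_gen_matrix_28 check_gen_matrix_29 check_gen_matrix_30 check_gen_matrix_31 check_gen_matrix_32 check_gen_matrix_33 check_gen_matrix_34 check_gen_matrix_35 check_gen_matrix_36)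

lemma codes_invariants_distinct: "distinct (map (snd \<circ> snd) codes)"
  by (simp add: codes_def)

lemma length_codes: "length codes = 37"
  by (simp add: codes_def)

text \<open>The codes of the 37 matrices are extremal Type II, and codes with distinct residue
  invariants are inequivalent.\<close>
theorem mainTheorem12:
  shows "\<exists>F :: nat \<Rightarrow> (40 \<Rightarrow> 4) set.
           (\<forall>k<37. extremal_type_II (F k)) \<and>
           (\<forall>j<37. \<forall>k<37. j \<noteq> k \<longrightarrow> \<not> z4_equiv (F j) (F k))"
proof -
  define F where "F j = standard_generators.gen_code (gvec (fst (codes ! j))) pivot40 8" for j
  have check: "check (fst (codes ! j)) (fst (snd (codes ! j))) (snd (snd (codes ! j)))" if "j < 37" for j
    using codes_checked that length_codes by (auto simp: list_all_length split: prod.splits)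
  have "extremal_type_II (F j)" if "j < 37" for j
    unfolding F_def using extremal_generators.gen_code_extremal[OF check_extremal_generators[OF check[OF that]]]
    by simp
  moreover have invariant: "residue_invariant (F j) = snd (snd (codes ! j))" if "j < 37" for j
    unfolding F_def by (rule check_residue_invariant[OF check[OF that]])
  moreover have "\<not> z4_equiv (F j) (F k)" if "j < 37" "k < 37" "j \<noteq> k" for j k
  proof
    assume "z4_equiv (F j) (F k)"
    then have "residue_invariant (F k) = residue_invariant (F j)" by (rule residue_invariant_equiv)
    then have "map (snd \<circ> snd) codes ! k = map (snd \<circ> snd) codes ! j"
      using that length_codes by (simp add: invariant)
    then show False
      using nth_eq_iff_index_eq[OF codes_invariants_distinct] that length_codes by simp
  qed
  ultimately show ?thesis by blast
qed

end
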